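(* Let $1\le d<N$, let $w\in I_{d,N}$ with $w\ne(1,\dots,d)$, and let $T\subseteq GL_N$ be the maximal torus of diagonal matrices, so that $(w,d,N,T)$ is a stable Levi–Schubert quadruple. Let $(\overline w,\overline d,\overline N,\overline T)$ be its reduction. Then $(w,d,N,T)$ is spherical (i.e. $X(w)$ has a dense open $T$-orbit) if and only if $\overline w=(\overline N)$ (with $\overline d=1$) or $\overline d\ge2$ and $\overline w=(2,3,\dots,\overline d,\overline N)$.
   Context: Work over $\mathbb{C}$. $G_{d,N}$ is the Grassmannian of $d$-planes in $\mathbb{C}^N$; $B\subset GL_N$ upper triangular, $T\subset B$ the diagonal matrices. $I_{d,N}$ is the set of sequences $(i_1<\dots<i_d)$ in $\{1,\dots,N\}$. For $w=(\ell_1,\dots,\ell_d)\in I_{d,N}$, $X(w)$ is the closure of $B\cdot[e_{\ell_1}\wedge\dots\wedge e_{\ell_d}]$. A Levi–Schubert quadruple $(w,d,N,L)$ with $L$ a standard (block diagonal) Levi subgroup of $GL_N$ is stable if $X(w)$ is $L$-stable under left multiplication, and then spherical if $X(w)$ has a dense open orbit of a Borel subgroup of $L$; $T$ is the Levi with all blocks of size $1$. Reduction: let $p\ge0$ be maximal with $\ell_i=i$ for $i\le p$; then $\overline w=(\ell_{p+1}-p,\dots,\ell_d-p)$, $\overline d=d-p$, $\overline N=\ell_d-p$, and $\overline T$ is the diagonal torus of $GL_{\overline N}$ (image of $T$ under taking the principal submatrix on rows and columns $p+1,\dots,\ell_d$). *)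

theory Defs
  imports "HOL-Analysis.Analysis"
begin

text \<open>Coordinates are indexed by 1..N. Vectors of C^N are functions nat => complex
  vanishing outside {1..N}; N x N matrices are functions nat => nat => complex
  vanishing outside {1..N} x {1..N}; d x N "frame" matrices vanish outside {1..d} x {1..N}.\<close>

definition sq_mat :: "nat \<Rightarrow> (nat \<Rightarrow> nat \<Rightarrow> complex) set" where
  "sq_mat N = {g. \<forall>j k. \<not> (1 \<le> j \<and> j \<le> N \<and> 1 \<le> k \<and> k \<le> N) \<longrightarrow> g j k = 0}"

definition mat_mult :: "nat \<Rightarrow> (nat \<Rightarrow> nat \<Rightarrow> complex) \<Rightarrow> (nat \<Rightarrow> nat \<Rightarrow> complex) \<Rightarrow> (nat \<Rightarrow> nat \<Rightarrow> complex)" where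
  "mat_mult N g h = (\<lambda>j k. \<Sum>m=1..N. g j m * h m k)"

definition id_mat :: "nat \<Rightarrow> nat \<Rightarrow> nat \<Rightarrow> complex" where
  "id_mat N = (\<lambda>j k. if j = k \<and> 1 \<le> j \<and> j \<le> N then 1 else 0)"

definition GL :: "nat \<Rightarrow> (nat \<Rightarrow> nat \<Rightarrow> complex) set" where
  "GL N = {g \<in> sq_mat N. \<exists>h \<in> sq_mat N. mat_mult N g h = id_mat N \<and> mat_mult N h g = id_mat N}"

definition borel :: "nat \<Rightarrow> (nat \<Rightarrow> nat \<Rightarrow> complex) set" where
  "borel N = {g \<in> GL N. \<forall>j k. k < j \<longrightarrow> g j k = 0}"

definition torus :: "nat \<Rightarrow> (nat \<Rightarrow> nat \<Rightarrow> complex) set" where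
  "torus N = {g \<in> GL N. \<forall>j k. j \<noteq> k \<longrightarrow> g j k = 0}"

definition mat_act :: "nat \<Rightarrow> (nat \<Rightarrow> nat \<Rightarrow> complex) \<Rightarrow> (nat \<Rightarrow> complex) set \<Rightarrow> (nat \<Rightarrow> complex) set" where
  "mat_act N g V = (\<lambda>v. \<lambda>j. \<Sum>k=1..N. g j k * v k) ` V"

definition frames :: "nat \<Rightarrow> nat \<Rightarrow> (nat \<Rightarrow> nat \<Rightarrow> complex) set" where
  "frames d N = {A. (\<forall>i j. \<not> (1 \<le> i \<and> i \<le> d \<and> 1 \<le> j \<and> j \<le> N) \<longrightarrow> A i j = 0) \<and>
      (\<forall>c::nat \<Rightarrow> complex. (\<forall>j. (\<Sum>i=1..d. c i * A i j) = 0) \<longrightarrow> (\<forall>i\<in>{1..d}. c i = 0))}"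

definition rowsp :: "nat \<Rightarrow> (nat \<Rightarrow> nat \<Rightarrow> complex) \<Rightarrow> (nat \<Rightarrow> complex) set" where
  "rowsp d A = {(\<lambda>j. \<Sum>i=1..d. c i * A i j) | c. True}"

definition grass :: "nat \<Rightarrow> nat \<Rightarrow> (nat \<Rightarrow> complex) set set" where
  "grass d N = rowsp d ` frames d N"

definition grass_top :: "nat \<Rightarrow> nat \<Rightarrow> (nat \<Rightarrow> complex) set topology" where
  "grass_top d N = topology (\<lambda>U. U \<subseteq> grass d N \<and>
      openin (top_of_set (frames d N)) {A \<in> frames d N. rowsp d A \<in> U})"

definition I_seq :: "nat \<Rightarrow> nat \<Rightarrow> nat list set" where
  "I_seq d N = {w. length w = d \<and> sorted_wrt (<) w \<and> (\<forall>l\<in>set w. 1 \<le> l \<and> l \<le> N)}"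

definition e_pt :: "nat list \<Rightarrow> (nat \<Rightarrow> complex) set" where
  "e_pt w = rowsp (length w) (\<lambda>i j. if 1 \<le> i \<and> i \<le> length w \<and> j = w ! (i - 1) then 1 else 0)"

definition schubert :: "nat list \<Rightarrow> nat \<Rightarrow> nat \<Rightarrow> (nat \<Rightarrow> complex) set set" where
  "schubert w d N = (grass_top d N) closure_of ((\<lambda>g. mat_act N g (e_pt w)) ` borel N)"

definition T_spherical :: "nat list \<Rightarrow> nat \<Rightarrow> nat \<Rightarrow> bool" where
  "T_spherical w d N = (\<exists>V \<in> schubert w d N.
      let Orb = (\<lambda>t. mat_act N t V) ` torus N in
      openin (subtopology (grass_top d N) (schubert w d N)) Orb \<and>
      schubert w d N \<subseteq> (grass_top d N) closure_of Orb)"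

definition red_p :: "nat list \<Rightarrow> nat" where
  "red_p w = (GREATEST p. p \<le> length w \<and> (\<forall>i<p. w ! i = i + 1))"

definition red_w :: "nat list \<Rightarrow> nat list" where
  "red_w w = map (\<lambda>l. l - red_p w) (drop (red_p w) w)"

definition red_d :: "nat list \<Rightarrow> nat" where
  "red_d w = length w - red_p w"

definition red_N :: "nat list \<Rightarrow> nat" where
  "red_N w = last w - red_p w"

end

theory Submission
  imports Defs "Jordan_Normal_Form.Determinant"
begin

text \<open>
  A point of the Grassmannian is the row space of a full-rank frame and is measured by its
  Pluecker coordinates, the maximal minors; the torus scales the minor on the columns \<open>I\<close> by the
  product of its diagonal entries over \<open>I\<close>. On \<open>X(w)\<close> the coordinates obtained by raising one
  entry of \<open>w\<close> vanish, and on the open cell a frame can be normalised to the identity in the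
  columns of \<open>w\<close>; its other entries sit at the free positions \<open>(i, j)\<close> with \<open>j \<notin> w\<close>, \<open>j < w_i\<close>.

  The reduction condition says exactly that all entries of \<open>w\<close> but the last lie in \<open>{1..d}\<close>.
  Then there is a single gap \<open>q \<le> d\<close>, and torus action together with row scaling reaches every
  normal form with nonzero free coordinates: this set is a single orbit, open in \<open>X(w)\<close>, and
  dense because zero free coordinates can be perturbed away. Otherwise some row \<open>i1 < d - 1\<close>
  has \<open>w_i1 > d\<close> and there are two gaps \<open>q, q' \<le> d\<close>; the cross ratio of the coordinates at
  \<open>w[i1:=q], w[d-1:=q'], w[i1:=q'], w[d-1:=q]\<close> is torus invariant but takes every value on
  \<open>X(w)\<close>, so no orbit is dense.
\<close>

section \<open>Frames, row spaces and Pluecker coordinates\<close>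

definition row_comb :: "nat \<Rightarrow> (nat \<Rightarrow> complex) \<Rightarrow> (nat \<Rightarrow> nat \<Rightarrow> complex) \<Rightarrow> nat \<Rightarrow> complex" where
  "row_comb d c A = (\<lambda>j. \<Sum>i=1..d. c i * A i j)"

lemma rowsp_eq_range: "rowsp d A = range (\<lambda>c. row_comb d c A)"
  unfolding rowsp_def row_comb_def by auto

lemma sum_delta_mult:
  fixes f :: "'b \<Rightarrow> 'a::semiring_1"
  assumes "finite S" "i \<in> S"
  shows "(\<Sum>k\<in>S. (if i = k then 1 else 0) * f k) = f i"
proof -
  have "(\<Sum>k\<in>S. (if i = k then 1 else 0) * f k) = (\<Sum>k\<in>S. if i = k then f k else 0)"
    by (rule sum.cong) auto
  then show ?thesis using assms by simp
qed

lemma mat_mult_assoc: "mat_mult N g (mat_mult N h k) = mat_mult N (mat_mult N g h) k"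
  unfolding mat_mult_def
  by (auto simp: sum_distrib_left sum_distrib_right mult.assoc intro!: ext sum.swap)

lemma row_comb_mat_mult: "row_comb d c (mat_mult d M A) = row_comb d (\<lambda>k. \<Sum>i=1..d. c i * M i k) A"
  unfolding row_comb_def mat_mult_def
  by (auto simp: sum_distrib_left sum_distrib_right mult.assoc intro!: ext sum.swap)

lemma rowsp_mat_mult_subset: "rowsp d (mat_mult d M A) \<subseteq> rowsp d A"
  unfolding rowsp_eq_range row_comb_mat_mult by blast

lemma rowsp_cong:
  assumes "\<And>i. i \<in> {1..d} \<Longrightarrow> A i = B i"
  shows "rowsp d A = rowsp d B"
proof -
  have "row_comb d c A = row_comb d c B" for c
    unfolding row_comb_def using assms by (auto intro!: ext sum.cong)
  then show ?thesis unfolding rowsp_eq_range by simp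
qed

lemma mat_mult_cong:
  assumes "\<And>i. i \<in> {1..d} \<Longrightarrow> A i = B i"
  shows "mat_mult d M A = mat_mult d M B"
  unfolding mat_mult_def using assms by (auto intro!: ext sum.cong)

lemma row_in_rowsp:
  assumes "i \<in> {1..d}"
  shows "A i \<in> rowsp d A"
proof -
  have "row_comb d (\<lambda>k. if i = k then 1 else 0) A = A i"
    unfolding row_comb_def using assms by (auto simp: sum_delta_mult)
  then show ?thesis unfolding rowsp_eq_range by (metis rangeI)
qed

lemma rowsp_subset_imp_mat_mult:
  assumes "rowsp d A' \<subseteq> rowsp d A"
  obtains M where "\<And>i. i \<in> {1..d} \<Longrightarrow> A' i = mat_mult d M A i"
proof -
  have "\<forall>i\<in>{1..d}. \<exists>c. A' i = row_comb d c A"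
    using row_in_rowsp[of _ d A'] assms unfolding rowsp_eq_range by blast
  then obtain M where "\<forall>i\<in>{1..d}. A' i = row_comb d (M i) A" by metis
  then show ?thesis by (intro that[of M]) (auto simp: row_comb_def mat_mult_def)
qed

lemma rowsp_scale_rows:
  assumes s: "\<And>i. i \<in> {1..d} \<Longrightarrow> s i \<noteq> 0"
  shows "rowsp d (\<lambda>i j. s i * B i j) = rowsp d B"
proof -
  have "row_comb d c (\<lambda>i j. s i * B i j) = row_comb d (\<lambda>i. c i * s i) B" for c
    unfolding row_comb_def by (simp add: mult.assoc)
  moreover have "row_comb d c B = row_comb d (\<lambda>i. c i / s i) (\<lambda>i j. s i * B i j)" for c
    unfolding row_comb_def using s by (auto intro!: ext sum.cong)
  ultimately show ?thesis unfolding rowsp_eq_range by (metis (no_types, lifting) rangeI subset_antisym image_subset_iff)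
qed

text \<open>Frames are indexed from 1, JNF matrices and the column list \<open>I\<close> from 0.\<close>

definition to_mat :: "nat \<Rightarrow> (nat \<Rightarrow> nat \<Rightarrow> complex) \<Rightarrow> complex mat" where
  "to_mat d M = mat d d (\<lambda>(a, b). M (Suc a) (Suc b))"

definition of_mat :: "nat \<Rightarrow> complex mat \<Rightarrow> nat \<Rightarrow> nat \<Rightarrow> complex" where
  "of_mat d S = (\<lambda>i k. if 1 \<le> i \<and> i \<le> d \<and> 1 \<le> k \<and> k \<le> d then S $$ (i - 1, k - 1) else 0)"

definition minor_mat :: "nat \<Rightarrow> (nat \<Rightarrow> nat \<Rightarrow> complex) \<Rightarrow> nat list \<Rightarrow> complex mat" where
  "minor_mat d A I = mat d d (\<lambda>(a, b). A (Suc a) (I ! b))"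

definition plucker :: "nat \<Rightarrow> (nat \<Rightarrow> nat \<Rightarrow> complex) \<Rightarrow> nat list \<Rightarrow> complex" where
  "plucker d A I = det (minor_mat d A I)"

lemma to_mat_carrier [simp]: "to_mat d M \<in> carrier_mat d d"
  unfolding to_mat_def by simp

lemma minor_mat_carrier [simp]: "minor_mat d A I \<in> carrier_mat d d"
  unfolding minor_mat_def by simp

lemma to_mat_of_mat: "S \<in> carrier_mat d d \<Longrightarrow> to_mat d (of_mat d S) = S"
  by (rule eq_matI) (auto simp: to_mat_def of_mat_def)

lemma minor_mat_mat_mult: "minor_mat d (mat_mult d M A) I = to_mat d M * minor_mat d A I"
  by (rule eq_matI)
    (auto simp: minor_mat_def to_mat_def mat_mult_def scalar_prod_def sum.atLeast1_atMost_eq atLeast0LessThan)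

lemma to_mat_mat_mult: "to_mat d (mat_mult d M M') = to_mat d M * to_mat d M'"
  by (rule eq_matI)
    (auto simp: to_mat_def mat_mult_def scalar_prod_def sum.atLeast1_atMost_eq atLeast0LessThan)

lemma plucker_mat_mult: "plucker d (mat_mult d M A) I = det (to_mat d M) * plucker d A I"
  unfolding plucker_def minor_mat_mat_mult using det_mult[OF to_mat_carrier minor_mat_carrier] .

lemma plucker_cong:
  assumes "\<And>i. i \<in> {1..d} \<Longrightarrow> A i = B i"
  shows "plucker d A I = plucker d B I"
  unfolding plucker_def minor_mat_def using assms by (auto intro!: arg_cong[where f = det] eq_matI)

lemma mat_mult_to_mat_one:
  assumes P: "to_mat d P = 1\<^sub>m d" and i: "i \<in> {1..d}"
  shows "mat_mult d P A i = A i"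
proof
  fix j
  have "P i k = (if i = k then 1 else 0)" if "k \<in> {1..d}" for k
    using arg_cong[OF P, of "\<lambda>M. M $$ (i - 1, k - 1)"] i that by (auto simp: to_mat_def)
  then have "mat_mult d P A i j = (\<Sum>k=1..d. (if i = k then 1 else 0) * A k j)"
    unfolding mat_mult_def by (auto intro!: sum.cong)
  also have "\<dots> = A i j" using i by (simp add: sum_delta_mult)
  finally show "mat_mult d P A i j = A i j" .
qed

lemma rowsp_mat_mult_invertible:
  assumes "to_mat d M' * to_mat d M = 1\<^sub>m d"
  shows "rowsp d (mat_mult d M A) = rowsp d A"
proof
  have "to_mat d (mat_mult d M' M) = 1\<^sub>m d" using assms by (simp add: to_mat_mat_mult)
  then have "rowsp d A = rowsp d (mat_mult d M' (mat_mult d M A))"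
    unfolding mat_mult_assoc by (intro rowsp_cong) (simp add: mat_mult_to_mat_one)
  also have "\<dots> \<subseteq> rowsp d (mat_mult d M A)" by (rule rowsp_mat_mult_subset)
  finally show "rowsp d A \<subseteq> rowsp d (mat_mult d M A)" .
qed (rule rowsp_mat_mult_subset)

lemma frames_if_plucker_nonzero:
  assumes box: "\<And>i j. \<not> (1 \<le> i \<and> i \<le> d \<and> 1 \<le> j \<and> j \<le> N) \<Longrightarrow> A i j = 0"
    and nz: "plucker d A I \<noteq> 0"
  shows "A \<in> frames d N"
proof -
  have "\<forall>i\<in>{1..d}. c i = 0" if h: "\<forall>j. (\<Sum>i=1..d. c i * A i j) = 0" for c
  proof -
    let ?S = "transpose_mat (minor_mat d A I)"
    define v where "v = vec d (\<lambda>a. c (Suc a))"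
    have "?S *\<^sub>v v = 0\<^sub>v d"
    proof (rule eq_vecI)
      fix b assume "b < dim_vec (0\<^sub>v d :: complex vec)"
      then have b: "b < d" by simp
      have "(?S *\<^sub>v v) $ b = (\<Sum>i=1..d. c i * A i (I ! b))"
        using b by (simp add: minor_mat_def v_def scalar_prod_def sum.atLeast1_atMost_eq
            atLeast0LessThan mult.commute)
      then show "(?S *\<^sub>v v) $ b = 0\<^sub>v d $ b" using b h by simp
    qed (simp add: minor_mat_def)
    moreover have "det ?S \<noteq> 0" using nz by (simp add: plucker_def det_transpose[OF minor_mat_carrier])
    moreover have "?S \<in> carrier_mat d d" "v \<in> carrier_vec d" by (simp_all add: v_def)
    ultimately have "v = 0\<^sub>v d"
      using det_0_iff_vec_prod_zero_field[of ?S d] by blast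
    show ?thesis
    proof
      fix i assume "i \<in> {1..d}"
      then have "i - 1 < d" "Suc (i - 1) = i" by auto
      then show "c i = 0"
        using arg_cong[OF \<open>v = 0\<^sub>v d\<close>, of "\<lambda>u. vec_index u (i - 1)"] by (simp add: v_def)
    qed
  qed
  then show ?thesis using box unfolding frames_def by auto
qed

lemma frame_rows_independent:
  assumes "A \<in> frames d N" and "\<forall>j. (\<Sum>i=1..d. c i * A i j) = 0" and "i \<in> {1..d}"
  shows "c i = 0"
  using assms unfolding frames_def by blast

lemma plucker_proportional:
  assumes A: "A \<in> frames d N" and A': "A' \<in> frames d N" and eq: "rowsp d A = rowsp d A'"
  obtains c where "c \<noteq> 0" "\<And>I. plucker d A' I = c * plucker d A I"
proof -
  obtain M where M: "\<And>i. i \<in> {1..d} \<Longrightarrow> A' i = mat_mult d M A i"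
    using rowsp_subset_imp_mat_mult eq by blast
  obtain M' where M': "\<And>i. i \<in> {1..d} \<Longrightarrow> A i = mat_mult d M' A' i"
    using rowsp_subset_imp_mat_mult eq by blast
  let ?P = "mat_mult d M' M"
  have A_eq: "A i = mat_mult d ?P A i" if "i \<in> {1..d}" for i
    using M' that mat_mult_cong[of d A' "mat_mult d M A" M'] M by (simp add: mat_mult_assoc)
  have P: "?P i k = (if i = k then 1 else 0)" if ik: "i \<in> {1..d}" "k \<in> {1..d}" for i k
  proof -
    have "(\<Sum>k=1..d. (?P i k - (if i = k then 1 else 0)) * A k j) = 0" for j
    proof -
      have "(\<Sum>k=1..d. (?P i k - (if i = k then 1 else 0)) * A k j)
          = mat_mult d ?P A i j - (\<Sum>k=1..d. (if i = k then 1 else 0) * A k j)"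
        unfolding mat_mult_def by (simp add: algebra_simps sum_subtractf)
      then show ?thesis using A_eq[OF ik(1)] ik(1) by (simp add: sum_delta_mult)
    qed
    then have "?P i k - (if i = k then 1 else 0) = 0"
      using frame_rows_independent[OF A, of "\<lambda>k. ?P i k - (if i = k then 1 else 0)" k] ik(2) by blast
    then show ?thesis by simp
  qed
  have "to_mat d M' * to_mat d M = 1\<^sub>m d"
    unfolding to_mat_mat_mult[symmetric] by (rule eq_matI) (auto simp: P to_mat_def)
  then have "det (to_mat d M') * det (to_mat d M) = 1"
    by (metis det_mult det_one to_mat_carrier)
  then have "det (to_mat d M) \<noteq> 0" by auto
  moreover have "plucker d A' I = det (to_mat d M) * plucker d A I" for I
    using plucker_cong[of d A' "mat_mult d M A" I] M by (simp add: plucker_mat_mult)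
  ultimately show ?thesis using that by blast
qed

definition torus_weight :: "nat \<Rightarrow> (nat \<Rightarrow> complex) \<Rightarrow> nat list \<Rightarrow> complex" where
  "torus_weight d t I = (\<Prod>b<d. t (I ! b))"

lemma plucker_scale_cols: "plucker d (\<lambda>i j. A i j * t j) I = plucker d A I * torus_weight d t I"
proof -
  define D where "D = mat d d (\<lambda>(a, b). if a = b then t (I ! a) else (0::complex))"
  have D: "D \<in> carrier_mat d d" by (simp add: D_def)
  have "minor_mat d (\<lambda>i j. A i j * t j) I = minor_mat d A I * D"
  proof (rule eq_matI)
    fix a b assume "a < dim_row (minor_mat d A I * D)" "b < dim_col (minor_mat d A I * D)"
    then have a: "a < d" and b: "b < d" by (auto simp: D_def minor_mat_def)
    have "(minor_mat d A I * D) $$ (a, b) = (\<Sum>k<d. (if b = k then 1 else 0) * (A (Suc a) (I ! k) * t (I ! k)))"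
      using a b by (auto simp: minor_mat_def D_def scalar_prod_def atLeast0LessThan intro!: sum.cong)
    also have "\<dots> = A (Suc a) (I ! b) * t (I ! b)" using b by (simp add: sum_delta_mult)
    finally show "minor_mat d (\<lambda>i j. A i j * t j) I $$ (a, b) = (minor_mat d A I * D) $$ (a, b)"
      using a b by (simp add: minor_mat_def)
  qed (auto simp: minor_mat_def D_def)
  moreover have "det D = torus_weight d t I"
    using det_upper_triangular[OF _ D]
    by (simp add: upper_triangular_def D_def diag_mat_def torus_weight_def
        prod.distinct_set_conv_list[symmetric] atLeast0LessThan)
  ultimately show ?thesis unfolding plucker_def using det_mult[OF minor_mat_carrier D] by simp
qed

lemma torus_weight_update:
  assumes i: "i < d" and len: "length w = d"
  shows "torus_weight d t (w[i := j]) * t (w ! i) = torus_weight d t w * t j"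
proof -
  have i': "i \<in> {..<d}" using i by simp
  have "(\<Prod>b\<in>{..<d} - {i}. t (w[i := j] ! b)) = (\<Prod>b\<in>{..<d} - {i}. t (w ! b))"
    by (rule prod.cong) auto
  moreover have "w[i := j] ! i = j" using i len by simp
  ultimately have "torus_weight d t (w[i := j]) = t j * (\<Prod>b\<in>{..<d} - {i}. t (w ! b))"
    unfolding torus_weight_def using prod.remove[OF finite_lessThan i'] by metis
  moreover have "torus_weight d t w = t (w ! i) * (\<Prod>b\<in>{..<d} - {i}. t (w ! b))"
    unfolding torus_weight_def by (rule prod.remove[OF finite_lessThan i'])
  ultimately show ?thesis by (simp add: mult_ac)
qed

lemma torus_weight_swap:
  assumes "i1 < d" "i2 < d" "length w = d" "t (w ! i1) \<noteq> 0" "t (w ! i2) \<noteq> 0"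
  shows "torus_weight d t (w[i1 := q]) * torus_weight d t (w[i2 := q'])
       = torus_weight d t (w[i1 := q']) * torus_weight d t (w[i2 := q])"
proof -
  let ?W = "torus_weight d t"
  have "?W (w[i1 := q]) * ?W (w[i2 := q']) * (t (w ! i1) * t (w ! i2))
      = (?W (w[i1 := q]) * t (w ! i1)) * (?W (w[i2 := q']) * t (w ! i2))"
    by (simp add: mult_ac)
  also have "\<dots> = (?W (w[i1 := q']) * t (w ! i1)) * (?W (w[i2 := q]) * t (w ! i2))"
    unfolding torus_weight_update[OF assms(1,3)] torus_weight_update[OF assms(2,3)] by (simp add: mult_ac)
  also have "\<dots> = ?W (w[i1 := q']) * ?W (w[i2 := q]) * (t (w ! i1) * t (w ! i2))"
    by (simp add: mult_ac)
  finally show ?thesis using assms(4,5) by simp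
qed

definition normalized_at :: "nat \<Rightarrow> nat list \<Rightarrow> (nat \<Rightarrow> nat \<Rightarrow> complex) \<Rightarrow> bool" where
  "normalized_at d w R \<longleftrightarrow> (\<forall>i k. i < d \<longrightarrow> k < d \<longrightarrow> R (Suc i) (w ! k) = (if i = k then 1 else 0))"

lemma plucker_normalized:
  assumes "normalized_at d w R"
  shows "plucker d R w = 1"
proof -
  have "minor_mat d R w = 1\<^sub>m d"
    using assms by (auto simp: minor_mat_def normalized_at_def intro!: eq_matI)
  then show ?thesis unfolding plucker_def by simp
qed

lemma plucker_normalized_update:
  assumes "normalized_at d w R" and "i < d" and "length w = d"
  shows "plucker d R (w[i := j]) = R (Suc i) j"
proof -
  define x where "x = vec d (\<lambda>a. R (Suc a) j)"
  have "minor_mat d R (w[i := j]) = replace_col (1\<^sub>m d) (1\<^sub>m d *\<^sub>v x) i"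
    using assms by (auto simp: minor_mat_def replace_col_def x_def normalized_at_def nth_list_update intro!: eq_matI)
  then show ?thesis
    unfolding plucker_def using cramer_lemma_mat[of "1\<^sub>m d" d x i] assms(2) by (simp add: x_def)
qed

lemma normalize_frame:
  assumes A: "A \<in> frames d N" and nz: "plucker d A w \<noteq> 0" and len: "length w = d"
  obtains R where "rowsp d R = rowsp d A" "R \<in> frames d N" "normalized_at d w R"
    "\<forall>i<d. \<forall>j. R (Suc i) j = plucker d A (w[i := j]) / plucker d A w"
proof -
  let ?S = "minor_mat d A w"
  obtain B where B: "B \<in> carrier_mat d d" "B * ?S = 1\<^sub>m d" "?S * B = 1\<^sub>m d"
    using det_non_zero_imp_unit[OF minor_mat_carrier nz[unfolded plucker_def]]
    unfolding Units_def ring_mat_def by auto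
  define R where "R = mat_mult d (of_mat d B) A"
  have rowsp: "rowsp d R = rowsp d A"
    unfolding R_def by (rule rowsp_mat_mult_invertible[where M' = "of_mat d ?S"]) (simp add: to_mat_of_mat B)
  have "minor_mat d R w = 1\<^sub>m d"
    unfolding R_def minor_mat_mat_mult by (simp add: to_mat_of_mat B)
  then have norm: "normalized_at d w R"
    unfolding normalized_at_def
    by (metis (no_types, lifting) minor_mat_def index_mat(1) index_one_mat(1) old.prod.case)
  have "det B * plucker d A w = det (B * minor_mat d A w)"
    unfolding plucker_def by (rule det_mult[OF B(1) minor_mat_carrier, symmetric])
  then have "det B * plucker d A w = 1" using B(2) by simp
  then have ratio: "plucker d R I = plucker d A I / plucker d A w" for I
    unfolding R_def plucker_mat_mult using nz by (simp add: to_mat_of_mat B field_simps)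
  have box: "R i j = 0" if "\<not> (1 \<le> i \<and> i \<le> d \<and> 1 \<le> j \<and> j \<le> N)" for i j
    using A that unfolding R_def mat_mult_def of_mat_def frames_def by (auto intro!: sum.neutral)
  show ?thesis
  proof (rule that[OF rowsp _ norm])
    show "R \<in> frames d N"
      by (rule frames_if_plucker_nonzero[of d N R w]) (use box plucker_normalized[OF norm] in auto)
    show "\<forall>i<d. \<forall>j. R (Suc i) j = plucker d A (w[i := j]) / plucker d A w"
      using plucker_normalized_update[OF norm _ len] ratio by simp
  qed
qed

lemma plucker_leibniz:
  "plucker d A I = (\<Sum>p\<in>{p. p permutes {0..<d}}. signof p * (\<Prod>i=0..<d. A (Suc i) (I ! p i)))"
  unfolding plucker_def det_def'[OF minor_mat_carrier]
proof (rule sum.cong[OF refl])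
  fix p assume "p \<in> {p. p permutes {0..<d}}"
  then have "p i < d" if "i < d" for i using permutes_in_image that by fastforce
  then show "signof p * (\<Prod>i=0..<d. minor_mat d A I $$ (i, p i)) = signof p * (\<Prod>i=0..<d. A (Suc i) (I ! p i))"
    by (simp add: minor_mat_def)
qed

lemma continuous_plucker: "continuous_on UNIV (\<lambda>A. plucker d A I)"
proof -
  have entry: "continuous_on UNIV (\<lambda>A::nat \<Rightarrow> nat \<Rightarrow> complex. A r c)" for r c
    by (rule continuous_on_product_then_coordinatewise[OF continuous_on_product_coordinates])
  show ?thesis unfolding plucker_leibniz
    by (intro continuous_on_sum continuous_on_mult continuous_on_const continuous_on_prod entry)
qed

lemma open_plucker_nonzero: "open {A. plucker d A I \<noteq> c}"
  by (rule open_Collect_neq[OF continuous_plucker continuous_on_const])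

section \<open>The topology of the Grassmannian\<close>

definition scale_invariant :: "((nat list \<Rightarrow> complex) \<Rightarrow> bool) \<Rightarrow> bool" where
  "scale_invariant P \<longleftrightarrow> (\<forall>f c. P f \<longrightarrow> c \<noteq> 0 \<longrightarrow> P (\<lambda>I. c * f I))"

definition plucker_set :: "nat \<Rightarrow> nat \<Rightarrow> ((nat list \<Rightarrow> complex) \<Rightarrow> bool) \<Rightarrow> (nat \<Rightarrow> complex) set set" where
  "plucker_set d N P = rowsp d ` {A \<in> frames d N. P (plucker d A)}"

lemma rowsp_in_plucker_set_iff:
  assumes A: "A \<in> frames d N" and P: "scale_invariant P"
  shows "rowsp d A \<in> plucker_set d N P \<longleftrightarrow> P (plucker d A)"
proof
  assume "rowsp d A \<in> plucker_set d N P"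
  then obtain A' where A': "A' \<in> frames d N" "P (plucker d A')" "rowsp d A' = rowsp d A"
    unfolding plucker_set_def by auto
  obtain c where "c \<noteq> 0" "\<And>I. plucker d A I = c * plucker d A' I"
    using plucker_proportional[OF A'(1) A A'(3)] by blast
  then show "P (plucker d A)" using P A'(2) unfolding scale_invariant_def by presburger
qed (use A in \<open>auto simp: plucker_set_def\<close>)

lemma istopology_grass:
  "istopology (\<lambda>U. U \<subseteq> grass d N \<and> openin (top_of_set (frames d N)) {A \<in> frames d N. rowsp d A \<in> U})"
  (is "istopology ?L")
proof -
  have "?L (S \<inter> T)" if "?L S" "?L T" for S T
  proof -
    have "{A \<in> frames d N. rowsp d A \<in> S \<inter> T}
        = {A \<in> frames d N. rowsp d A \<in> S} \<inter> {A \<in> frames d N. rowsp d A \<in> T}"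
      by auto
    then show ?thesis using that by (auto intro: openin_Int)
  qed
  moreover have "?L (\<Union>K)" if "\<forall>S\<in>K. ?L S" for K
  proof -
    have "{A \<in> frames d N. rowsp d A \<in> \<Union>K} = (\<Union>S\<in>K. {A \<in> frames d N. rowsp d A \<in> S})"
      by auto
    then show ?thesis using that by (auto intro!: openin_Union)
  qed
  ultimately show ?thesis unfolding istopology_def by blast
qed

lemma openin_grass_top:
  "openin (grass_top d N) U \<longleftrightarrow> U \<subseteq> grass d N \<and> openin (top_of_set (frames d N)) {A \<in> frames d N. rowsp d A \<in> U}"
  unfolding grass_top_def using topology_inverse'[OF istopology_grass] by simp

lemma rowsp_in_grass: "A \<in> frames d N \<Longrightarrow> rowsp d A \<in> grass d N"
  unfolding grass_def by auto

lemma topspace_grass_top: "topspace (grass_top d N) = grass d N"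
proof
  show "topspace (grass_top d N) \<subseteq> grass d N" unfolding topspace_def openin_grass_top by auto
  have "{A \<in> frames d N. rowsp d A \<in> grass d N} = frames d N" using rowsp_in_grass by auto
  then have "openin (grass_top d N) (grass d N)" unfolding openin_grass_top by auto
  then show "grass d N \<subseteq> topspace (grass_top d N)" by (rule openin_subset)
qed

lemma openin_plucker_set:
  assumes "open {A. P (plucker d A)}" and "scale_invariant P"
  shows "openin (grass_top d N) (plucker_set d N P)"
proof -
  have "{A \<in> frames d N. rowsp d A \<in> plucker_set d N P} = frames d N \<inter> {A. P (plucker d A)}"
    using rowsp_in_plucker_set_iff[OF _ assms(2)] by auto
  then show ?thesis
    unfolding openin_grass_top using assms(1) rowsp_in_grass
    by (auto simp: plucker_set_def intro: openin_open_Int)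
qed

lemma rowsp_in_closure_of_curve:
  fixes \<gamma> :: "complex \<Rightarrow> nat \<Rightarrow> nat \<Rightarrow> complex"
  assumes cont: "continuous_on UNIV \<gamma>" and \<gamma>0: "\<gamma> 0 \<in> frames d N"
    and near: "\<And>s. s \<noteq> 0 \<Longrightarrow> \<gamma> s \<in> frames d N \<and> rowsp d (\<gamma> s) \<in> S"
  shows "rowsp d (\<gamma> 0) \<in> grass_top d N closure_of S"
  unfolding in_closure_of
proof (intro conjI allI impI)
  show "rowsp d (\<gamma> 0) \<in> topspace (grass_top d N)"
    using \<gamma>0 by (simp add: topspace_grass_top rowsp_in_grass)
next
  fix U assume U: "rowsp d (\<gamma> 0) \<in> U \<and> openin (grass_top d N) U"
  then obtain W where W: "open W" "{A \<in> frames d N. rowsp d A \<in> U} = frames d N \<inter> W"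
    unfolding openin_grass_top openin_open by blast
  have "0 \<in> \<gamma> -` W" using U \<gamma>0 W(2) by blast
  moreover have "open (\<gamma> -` W)" using open_vimage[OF W(1) cont] .
  ultimately obtain e where e: "e > 0" "ball 0 e \<subseteq> \<gamma> -` W"
    by (meson open_contains_ball)
  define s where "s = complex_of_real (e / 2)"
  have "s \<in> ball 0 e" using e(1) unfolding s_def by (simp add: dist_norm)
  moreover have "s \<noteq> 0" using e(1) by (simp add: s_def)
  ultimately have "s \<noteq> 0" "\<gamma> s \<in> W" using e(2) by auto
  then show "\<exists>y. y \<in> S \<and> y \<in> U" using near W(2) by blast
qed

section \<open>The Borel subgroup and the torus\<close>

lemma sum_id_mat_left: "(\<Sum>m=1..N. id_mat N j m * X m) = (if 1 \<le> j \<and> j \<le> N then X j else 0)"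
  unfolding id_mat_def by (auto simp: sum_delta_mult)

lemma sum_id_mat_right: "(\<Sum>m=1..N. X m * id_mat N m k) = (if 1 \<le> k \<and> k \<le> N then X k else 0)"
proof -
  have "(\<Sum>m=1..N. X m * id_mat N m k) = (\<Sum>m=1..N. id_mat N k m * X m)"
    by (rule sum.cong) (auto simp: id_mat_def)
  also have "\<dots> = (if 1 \<le> k \<and> k \<le> N then X k else 0)" by (rule sum_id_mat_left)
  finally show ?thesis .
qed

lemma unipotent_in_borel:
  assumes nz: "\<And>j k. U j k \<noteq> 0 \<Longrightarrow> 1 \<le> j \<and> j < k \<and> k \<le> N"
    and sq: "\<And>j m k. U j m * U m k = 0"
  shows "(\<lambda>j k. id_mat N j k + U j k) \<in> borel N"
proof -
  let ?g = "\<lambda>j k. id_mat N j k + U j k" and ?h = "\<lambda>j k. id_mat N j k - U j k"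
  have out: "U j k = 0" if "\<not> (1 \<le> j \<and> j \<le> N \<and> 1 \<le> k \<and> k \<le> N)" for j k
    using nz[of j k] that by force
  have "mat_mult N ?g ?h = id_mat N"
  proof (intro ext)
    fix j k
    have "(\<Sum>m=1..N. ?g j m * ?h m k) = (\<Sum>m=1..N. id_mat N j m * ?h m k)
        + (\<Sum>m=1..N. U j m * id_mat N m k) - (\<Sum>m=1..N. U j m * U m k)"
      by (simp add: algebra_simps sum.distrib sum_subtractf)
    also have "\<dots> = id_mat N j k"
      unfolding sum_id_mat_left sum_id_mat_right sq using out[of j k] by (auto simp: id_mat_def)
    finally show "mat_mult N ?g ?h j k = id_mat N j k" unfolding mat_mult_def .
  qed
  moreover have "mat_mult N ?h ?g = id_mat N"
  proof (intro ext)
    fix j k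
    have "(\<Sum>m=1..N. ?h j m * ?g m k) = (\<Sum>m=1..N. id_mat N j m * ?g m k)
        - (\<Sum>m=1..N. U j m * id_mat N m k) - (\<Sum>m=1..N. U j m * U m k)"
      by (simp add: algebra_simps sum.distrib sum_subtractf)
    also have "\<dots> = id_mat N j k"
      unfolding sum_id_mat_left sum_id_mat_right sq using out[of j k] by (auto simp: id_mat_def)
    finally show "mat_mult N ?h ?g j k = id_mat N j k" unfolding mat_mult_def .
  qed
  moreover have "?g \<in> sq_mat N" "?h \<in> sq_mat N" using out unfolding sq_mat_def id_mat_def by auto
  moreover have "\<forall>j k. k < j \<longrightarrow> ?g j k = 0" using nz unfolding id_mat_def by force
  ultimately show ?thesis unfolding borel_def GL_def by blast
qed

lemma scale_rows_in_borel:
  assumes g: "g \<in> borel N" and t: "\<And>j. 1 \<le> j \<Longrightarrow> j \<le> N \<Longrightarrow> t j \<noteq> 0"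
  shows "(\<lambda>j k. t j * g j k) \<in> borel N"
proof -
  obtain h where h: "h \<in> sq_mat N" "mat_mult N g h = id_mat N" "mat_mult N h g = id_mat N"
    using g unfolding borel_def GL_def by auto
  let ?g = "\<lambda>j k. t j * g j k" and ?h = "\<lambda>j k. h j k / t k"
  have "mat_mult N ?g ?h = id_mat N"
  proof (intro ext)
    fix j k
    have "(\<Sum>m=1..N. ?g j m * ?h m k) = t j / t k * (\<Sum>m=1..N. g j m * h m k)"
      unfolding sum_distrib_left by (rule sum.cong) (simp_all add: divide_inverse mult_ac)
    also have "\<dots> = id_mat N j k"
      using fun_cong[OF fun_cong[OF h(2)], of j k] t[of k] by (auto simp: mat_mult_def id_mat_def)
    finally show "mat_mult N ?g ?h j k = id_mat N j k" unfolding mat_mult_def .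
  qed
  moreover have "mat_mult N ?h ?g = id_mat N"
  proof (intro ext)
    fix j k
    have "(\<Sum>m=1..N. ?h j m * ?g m k) = (\<Sum>m=1..N. h j m * g m k)"
      using t by (intro sum.cong) auto
    then show "mat_mult N ?h ?g j k = id_mat N j k"
      using fun_cong[OF fun_cong[OF h(3)], of j k] unfolding mat_mult_def by simp
  qed
  moreover have "?g \<in> sq_mat N" "?h \<in> sq_mat N"
    using g h(1) unfolding borel_def GL_def sq_mat_def by auto
  moreover have "\<forall>j k. k < j \<longrightarrow> ?g j k = 0" using g unfolding borel_def by simp
  ultimately show ?thesis unfolding borel_def GL_def by blast
qed

lemma borel_diag_nonzero:
  assumes g: "g \<in> borel N" and k: "1 \<le> k" "k \<le> N"
  shows "g k k \<noteq> 0"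
proof -
  obtain h where h: "mat_mult N g h = id_mat N" using g unfolding borel_def GL_def by auto
  have "to_mat N (id_mat N) = 1\<^sub>m N" by (rule eq_matI) (auto simp: to_mat_def id_mat_def)
  then have "det (to_mat N g) * det (to_mat N h) = 1"
    using arg_cong[OF h, of "\<lambda>M. det (to_mat N M)"]
    by (simp add: to_mat_mat_mult det_mult[OF to_mat_carrier to_mat_carrier])
  then have "det (to_mat N g) \<noteq> 0" by auto
  moreover have "upper_triangular (to_mat N g)"
    using g unfolding upper_triangular_def borel_def by (auto simp: to_mat_def)
  then have "det (to_mat N g) = (\<Prod>i<N. g (Suc i) (Suc i))"
    using det_upper_triangular[OF _ to_mat_carrier]
    by (simp add: diag_mat_def to_mat_def prod.distinct_set_conv_list[symmetric] atLeast0LessThan)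
  moreover have "k - 1 < N" "Suc (k - 1) = k" using k by auto
  ultimately show ?thesis by (metis finite_lessThan lessThan_iff prod_zero_iff)
qed

lemma torus_subset_borel: "torus N \<subseteq> borel N"
  unfolding torus_def borel_def by auto

lemma torus_diag_nonzero: "x \<in> torus N \<Longrightarrow> 1 \<le> j \<Longrightarrow> j \<le> N \<Longrightarrow> x j j \<noteq> 0"
  using borel_diag_nonzero torus_subset_borel by blast

definition torus_elem :: "nat \<Rightarrow> (nat \<Rightarrow> complex) \<Rightarrow> nat \<Rightarrow> nat \<Rightarrow> complex" where
  "torus_elem N t = (\<lambda>j k. if j = k \<and> 1 \<le> j \<and> j \<le> N then t j else 0)"

lemma torus_elem_in_torus:
  assumes t: "\<And>j. 1 \<le> j \<Longrightarrow> j \<le> N \<Longrightarrow> t j \<noteq> 0"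
  shows "torus_elem N t \<in> torus N"
proof -
  have mult: "mat_mult N (torus_elem N s) (torus_elem N s') = torus_elem N (\<lambda>j. s j * s' j)" for s s'
  proof (intro ext)
    fix j k
    have "mat_mult N (torus_elem N s) (torus_elem N s') j k
        = (\<Sum>m=1..N. (if j = m then 1 else 0) * (if j = k \<and> 1 \<le> j \<and> j \<le> N then s j * s' j else 0))"
      unfolding mat_mult_def torus_elem_def by (rule sum.cong) auto
    then show "mat_mult N (torus_elem N s) (torus_elem N s') j k = torus_elem N (\<lambda>j. s j * s' j) j k"
      by (auto simp: sum_delta_mult torus_elem_def)
  qed
  have "torus_elem N (\<lambda>j. t j * (1 / t j)) = id_mat N" "torus_elem N (\<lambda>j. (1 / t j) * t j) = id_mat N"
    using t by (auto simp: torus_elem_def id_mat_def intro!: ext)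
  then have "mat_mult N (torus_elem N t) (torus_elem N (\<lambda>j. 1 / t j)) = id_mat N"
    "mat_mult N (torus_elem N (\<lambda>j. 1 / t j)) (torus_elem N t) = id_mat N"
    by (simp_all only: mult)
  moreover have "torus_elem N s \<in> sq_mat N" for s unfolding sq_mat_def torus_elem_def by auto
  ultimately show ?thesis unfolding torus_def GL_def by (auto simp: torus_elem_def)
qed

lemma mat_act_rowsp: "mat_act N g (rowsp d A) = rowsp d (\<lambda>i j. \<Sum>k=1..N. g j k * A i k)"
proof -
  have "(\<lambda>j. \<Sum>k=1..N. g j k * row_comb d c A k) = row_comb d c (\<lambda>i j. \<Sum>k=1..N. g j k * A i k)" for c
    unfolding row_comb_def
    by (auto simp: sum_distrib_left sum_distrib_right mult.assoc mult.left_commute intro!: ext sum.swap)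
  then show ?thesis unfolding mat_act_def rowsp_eq_range by (simp add: image_image)
qed

lemma torus_act_rowsp:
  assumes x: "x \<in> torus N" and box: "\<And>i j. \<not> (1 \<le> j \<and> j \<le> N) \<Longrightarrow> A i j = 0"
  shows "mat_act N x (rowsp d A) = rowsp d (\<lambda>i j. A i j * x j j)"
proof -
  have sq: "x \<in> sq_mat N" and off: "\<And>j k. j \<noteq> k \<Longrightarrow> x j k = 0"
    using x unfolding torus_def GL_def by auto
  have "(\<Sum>k=1..N. x j k * A i k) = A i j * x j j" for i j
  proof (cases "1 \<le> j \<and> j \<le> N")
    case True
    have "(\<Sum>k=1..N. x j k * A i k) = (\<Sum>k=1..N. (if j = k then 1 else 0) * (x j k * A i k))"
      using off by (intro sum.cong) auto
    then show ?thesis using True by (simp add: sum_delta_mult mult.commute)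
  next
    case False
    then show ?thesis using sq box[of j i] unfolding sq_mat_def by auto
  qed
  then show ?thesis unfolding mat_act_rowsp by simp
qed

lemma frames_scale_cols:
  assumes A: "A \<in> frames d N" and s: "\<And>j. 1 \<le> j \<Longrightarrow> j \<le> N \<Longrightarrow> s j \<noteq> 0"
  shows "(\<lambda>i j. A i j * s j) \<in> frames d N"
proof -
  have box: "\<forall>i j. \<not> (1 \<le> i \<and> i \<le> d \<and> 1 \<le> j \<and> j \<le> N) \<longrightarrow> A i j = 0"
    using A unfolding frames_def by auto
  have "\<forall>i\<in>{1..d}. c i = 0" if h: "\<forall>j. (\<Sum>i=1..d. c i * (A i j * s j)) = 0" for c
  proof -
    have "(\<Sum>i=1..d. c i * A i j) = 0" for j
    proof (cases "1 \<le> j \<and> j \<le> N")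
      case True
      have "(\<Sum>i=1..d. c i * A i j) * s j = 0"
        using h by (simp add: sum_distrib_right mult.assoc)
      then show ?thesis using s True by simp
    qed (use box in simp)
    then show ?thesis using frame_rows_independent[OF A] by blast
  qed
  then show ?thesis using box unfolding frames_def by simp
qed

lemma torus_orbit_frame:
  assumes x: "x \<in> torus N" and A: "A \<in> frames d N"
  shows "mat_act N x (rowsp d A) = rowsp d (\<lambda>i j. A i j * x j j)"
    and "(\<lambda>i j. A i j * x j j) \<in> frames d N"
proof -
  show "mat_act N x (rowsp d A) = rowsp d (\<lambda>i j. A i j * x j j)"
    by (rule torus_act_rowsp[OF x]) (use A in \<open>auto simp: frames_def\<close>)
  show "(\<lambda>i j. A i j * x j j) \<in> frames d N"
    by (rule frames_scale_cols[OF A]) (rule torus_diag_nonzero[OF x])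
qed

section \<open>Schubert cells and Schubert varieties\<close>

lemma I_seq_length: "w \<in> I_seq d N \<Longrightarrow> length w = d"
  unfolding I_seq_def by auto

lemma I_seq_range: "w \<in> I_seq d N \<Longrightarrow> i < d \<Longrightarrow> 1 \<le> w ! i \<and> w ! i \<le> N"
  unfolding I_seq_def by (auto simp: nth_mem)

lemma I_seq_less: "w \<in> I_seq d N \<Longrightarrow> i < k \<Longrightarrow> k < d \<Longrightarrow> w ! i < w ! k"
  unfolding I_seq_def by (auto simp: sorted_wrt_iff_nth_less)

lemma I_seq_le: "w \<in> I_seq d N \<Longrightarrow> i \<le> k \<Longrightarrow> k < d \<Longrightarrow> w ! i \<le> w ! k"
  using I_seq_less by (metis le_eq_less_or_eq less_imp_le)

lemma I_seq_nth_eq_iff: "w \<in> I_seq d N \<Longrightarrow> i < d \<Longrightarrow> k < d \<Longrightarrow> w ! i = w ! k \<longleftrightarrow> i = k"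
  by (metis I_seq_less less_irrefl linorder_neqE_nat)

definition cell_frame :: "nat \<Rightarrow> (nat \<Rightarrow> nat \<Rightarrow> complex) \<Rightarrow> nat list \<Rightarrow> nat \<Rightarrow> nat \<Rightarrow> complex" where
  "cell_frame d g w = (\<lambda>i j. if 1 \<le> i \<and> i \<le> d then g j (w ! (i - 1)) else 0)"

lemma mat_act_e_pt:
  assumes w: "w \<in> I_seq d N"
  shows "mat_act N g (e_pt w) = rowsp d (cell_frame d g w)"
proof -
  have "e_pt w = rowsp d (\<lambda>i j. if 1 \<le> i \<and> i \<le> d \<and> j = w ! (i - 1) then 1 else 0)"
    unfolding e_pt_def I_seq_length[OF w] ..
  also have "mat_act N g \<dots> = rowsp d (cell_frame d g w)"
    unfolding mat_act_rowsp
  proof (rule rowsp_cong)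
    fix i assume i: "i \<in> {1..d}"
    then have wi: "w ! (i - 1) \<in> {1..N}" using I_seq_range[OF w, of "i - 1"] by auto
    show "(\<lambda>j. \<Sum>k=1..N. g j k * (if 1 \<le> i \<and> i \<le> d \<and> k = w ! (i - 1) then 1 else 0))
        = cell_frame d g w i"
    proof
      fix j
      have "(\<Sum>k=1..N. g j k * (if 1 \<le> i \<and> i \<le> d \<and> k = w ! (i - 1) then 1 else 0))
          = (\<Sum>k=1..N. (if w ! (i - 1) = k then 1 else 0) * g j k)"
        using i by (intro sum.cong) auto
      then show "(\<Sum>k=1..N. g j k * (if 1 \<le> i \<and> i \<le> d \<and> k = w ! (i - 1) then 1 else 0))
          = cell_frame d g w i j"
        using i wi by (simp add: sum_delta_mult cell_frame_def)
    qed
  qed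
  finally show ?thesis .
qed

lemma plucker_cell_frame_nonzero:
  assumes g: "g \<in> borel N" and w: "w \<in> I_seq d N"
  shows "plucker d (cell_frame d g w) w \<noteq> 0"
proof -
  have "minor_mat d (cell_frame d g w) w $$ (a, b) = 0" if "a < b" "b < d" for a b
    using I_seq_less[OF w that] that g by (simp add: minor_mat_def cell_frame_def borel_def)
  then have "plucker d (cell_frame d g w) w = prod_list (diag_mat (minor_mat d (cell_frame d g w) w))"
    unfolding plucker_def using det_lower_triangular minor_mat_carrier by blast
  also have "\<dots> = (\<Prod>a<d. g (w ! a) (w ! a))"
    by (simp add: diag_mat_def minor_mat_def cell_frame_def prod.distinct_set_conv_list[symmetric]
        atLeast0LessThan)
  also have "\<dots> \<noteq> 0"
    using borel_diag_nonzero[OF g] I_seq_range[OF w] by auto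
  finally show ?thesis .
qed

lemma cell_frame_in_frames:
  assumes g: "g \<in> borel N" and w: "w \<in> I_seq d N"
  shows "cell_frame d g w \<in> frames d N"
proof (rule frames_if_plucker_nonzero[OF _ plucker_cell_frame_nonzero[OF g w]])
  fix i j assume "\<not> (1 \<le> i \<and> i \<le> d \<and> 1 \<le> j \<and> j \<le> N)"
  then show "cell_frame d g w i j = 0"
    using g unfolding cell_frame_def borel_def GL_def sq_mat_def by auto
qed

lemma schubert_subset_grass: "schubert w d N \<subseteq> grass d N"
  unfolding schubert_def using closure_of_subset_topspace topspace_grass_top by metis

lemma cell_frame_in_schubert:
  assumes g: "g \<in> borel N" and w: "w \<in> I_seq d N"
  shows "rowsp d (cell_frame d g w) \<in> schubert w d N"
proof -
  have "(\<lambda>g. mat_act N g (e_pt w)) ` borel N \<subseteq> topspace (grass_top d N)"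
    using mat_act_e_pt[OF w] cell_frame_in_frames[OF _ w] rowsp_in_grass
    by (auto simp: topspace_grass_top)
  then show ?thesis
    using closure_of_subset g mat_act_e_pt[OF w] unfolding schubert_def by fastforce
qed

lemma cell_frame_unipotent:
  assumes w: "w \<in> I_seq d N" and U: "\<forall>j\<in>set w. \<forall>k. U j k = 0"
  shows "normalized_at d w (cell_frame d (\<lambda>j k. id_mat N j k + U j k) w)"
    and "\<And>i j. i < d \<Longrightarrow> j \<notin> set w \<Longrightarrow> cell_frame d (\<lambda>j k. id_mat N j k + U j k) w (Suc i) j = U j (w ! i)"
proof -
  show "normalized_at d w (cell_frame d (\<lambda>j k. id_mat N j k + U j k) w)"
    unfolding normalized_at_def
  proof (intro allI impI)
    fix i k assume ik: "i < d" "k < d"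
    then have "w ! k \<in> set w" using I_seq_length[OF w] by simp
    then show "cell_frame d (\<lambda>j k. id_mat N j k + U j k) w (Suc i) (w ! k) = (if i = k then 1 else 0)"
      using U I_seq_nth_eq_iff[OF w ik(2) ik(1)] I_seq_range[OF w ik(1)] I_seq_range[OF w ik(2)] ik
      by (simp add: cell_frame_def id_mat_def)
  qed
  show "cell_frame d (\<lambda>j k. id_mat N j k + U j k) w (Suc i) j = U j (w ! i)" if "i < d" "j \<notin> set w" for i j
    using that nth_mem[of i w] I_seq_length[OF w] by (auto simp: cell_frame_def id_mat_def)
qed

text \<open>Raising one entry of \<open>w\<close> kills the Pluecker coordinate of every point of the Schubert cell:
  in each term of the Leibniz expansion some row \<open>a \<le> i\<close> is matched with a column
  \<open>\<ge> w ! i\<close> beyond its own pivot \<open>w ! a\<close>, where the upper triangular \<open>g\<close> vanishes.\<close>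

lemma plucker_cell_frame_raise:
  assumes g: "g \<in> borel N" and w: "w \<in> I_seq d N" and i: "i < d" and j: "w ! i < j"
  shows "plucker d (cell_frame d g w) (w[i := j]) = 0"
proof -
  have len: "length w = d" using I_seq_length[OF w] .
  have ut: "\<And>a b. b < a \<Longrightarrow> g a b = 0" using g unfolding borel_def by auto
  have "(\<Prod>a=0..<d. cell_frame d g w (Suc a) (w[i := j] ! p a)) = 0" if p: "p permutes {0..<d}" for p
  proof -
    have "\<not> p ` {0..i} \<subseteq> {0..<i}"
    proof
      assume "p ` {0..i} \<subseteq> {0..<i}"
      moreover have "inj_on p {0..i}" using permutes_inj[OF p] by (auto intro: inj_on_subset)
      ultimately show False using card_inj_on_le[of p "{0..i}" "{0..<i}"] by simp
    qed
    then obtain a where "a \<in> {0..i}" "p a \<notin> {0..<i}" by blast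
    then have a: "a \<le> i" "i \<le> p a" by auto
    then have pa: "p a < d" using permutes_in_image[OF p, of a] i by auto
    have "w ! a < w[i := j] ! p a"
    proof (cases "p a = i")
      case True
      then show ?thesis using I_seq_le[OF w a(1) i] j i len by simp
    next
      case False
      then show ?thesis using I_seq_less[OF w _ pa, of a] a by simp
    qed
    then have "cell_frame d g w (Suc a) (w[i := j] ! p a) = 0"
      using ut a i by (simp add: cell_frame_def)
    moreover have "a \<in> {0..<d}" using a i by auto
    ultimately show ?thesis by (meson finite_atLeastLessThan prod_zero_iff)
  qed
  then show ?thesis unfolding plucker_leibniz by (intro sum.neutral) simp
qed

definition schubert_vanishing :: "nat \<Rightarrow> nat list \<Rightarrow> (nat list \<Rightarrow> complex) \<Rightarrow> bool" where
  "schubert_vanishing d w f \<longleftrightarrow> (\<forall>i<d. \<forall>j>w ! i. f (w[i := j]) = 0)"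

lemma schubert_vanishing_on_schubert:
  assumes w: "w \<in> I_seq d N" and A: "A \<in> frames d N" and X: "rowsp d A \<in> schubert w d N"
  shows "schubert_vanishing d w (plucker d A)"
proof -
  let ?C = "plucker_set d N (\<lambda>f. \<not> schubert_vanishing d w f)"
  have inv: "scale_invariant (\<lambda>f. \<not> schubert_vanishing d w f)"
    unfolding scale_invariant_def schubert_vanishing_def by auto
  have "{A. \<not> schubert_vanishing d w (plucker d A)}
      = (\<Union>i<d. \<Union>j\<in>{w ! i<..}. {A. plucker d A (w[i := j]) \<noteq> 0})"
    unfolding schubert_vanishing_def by auto
  then have "open {A. \<not> schubert_vanishing d w (plucker d A)}"
    by (simp add: open_UN open_plucker_nonzero)
  then have "openin (grass_top d N) ?C" by (rule openin_plucker_set[OF _ inv])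
  then have closed: "closedin (grass_top d N) (grass d N - ?C)"
    by (metis closedin_diff closedin_topspace topspace_grass_top)
  have "(\<lambda>g. mat_act N g (e_pt w)) ` borel N \<subseteq> grass d N - ?C"
  proof clarify
    fix g assume g: "g \<in> borel N"
    have "schubert_vanishing d w (plucker d (cell_frame d g w))"
      unfolding schubert_vanishing_def using plucker_cell_frame_raise[OF g w] by auto
    then show "mat_act N g (e_pt w) \<in> grass d N - ?C"
      using rowsp_in_plucker_set_iff[OF cell_frame_in_frames[OF g w] inv]
        rowsp_in_grass[OF cell_frame_in_frames[OF g w]] mat_act_e_pt[OF w] by simp
  qed
  then have "schubert w d N \<subseteq> grass d N - ?C"
    unfolding schubert_def by (rule closure_of_minimal[OF _ closed])
  then show ?thesis using X rowsp_in_plucker_set_iff[OF A inv] by blast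
qed

section \<open>A torus-invariant cross ratio\<close>

lemma spherical_orbit_frame:
  assumes "T_spherical w d N"
  obtains A0 where "\<forall>P A. open {A. P (plucker d A)} \<longrightarrow> scale_invariant P \<longrightarrow> A \<in> frames d N \<longrightarrow>
      rowsp d A \<in> schubert w d N \<longrightarrow> P (plucker d A) \<longrightarrow>
      (\<exists>x\<in>torus N. P (\<lambda>I. plucker d A0 I * torus_weight d (\<lambda>j. x j j) I))"
proof -
  obtain V where V: "V \<in> schubert w d N"
    and dense: "schubert w d N \<subseteq> grass_top d N closure_of ((\<lambda>t. mat_act N t V) ` torus N)"
    using assms unfolding T_spherical_def Let_def by blast
  obtain A0 where A0: "A0 \<in> frames d N" "V = rowsp d A0"
    using V schubert_subset_grass unfolding grass_def by blast
  show ?thesis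
  proof (rule that, intro allI impI)
    fix P A assume op: "open {A. P (plucker d A)}" and inv: "scale_invariant P"
      and A: "A \<in> frames d N" "rowsp d A \<in> schubert w d N" "P (plucker d A)"
    have "rowsp d A \<in> plucker_set d N P" using rowsp_in_plucker_set_iff[OF A(1) inv] A(3) by simp
    moreover have "rowsp d A \<in> grass_top d N closure_of ((\<lambda>t. mat_act N t V) ` torus N)"
      using dense A(2) by blast
    ultimately obtain V' where "V' \<in> (\<lambda>t. mat_act N t V) ` torus N" "V' \<in> plucker_set d N P"
      using openin_plucker_set[OF op inv, of N] unfolding in_closure_of by blast
    then obtain x where x: "x \<in> torus N" "mat_act N x V \<in> plucker_set d N P" by blast
    then have "P (plucker d (\<lambda>i j. A0 i j * x j j))"
      using torus_orbit_frame[OF x(1) A0(1)] rowsp_in_plucker_set_iff[OF _ inv] A0(2) by simp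
    moreover have "plucker d (\<lambda>i j. A0 i j * x j j) = (\<lambda>I. plucker d A0 I * torus_weight d (\<lambda>j. x j j) I)"
      using plucker_scale_cols[of d A0 "\<lambda>j. x j j"] by auto
    ultimately show "\<exists>x\<in>torus N. P (\<lambda>I. plucker d A0 I * torus_weight d (\<lambda>j. x j j) I)"
      using x(1) by auto
  qed
qed

lemma schubert_test_frame:
  assumes w: "w \<in> I_seq d N" and i12: "i1 < i2" "i2 < d"
    and q: "1 \<le> q" "q < w ! i1" "q \<notin> set w" and q': "1 \<le> q'" "q' < w ! i1" "q' \<notin> set w"
    and qq': "q \<noteq> q'"
  obtains R where "R \<in> frames d N" "rowsp d R \<in> schubert w d N"
    "plucker d R (w[i1 := q]) = a" "plucker d R (w[i1 := q']) = b"
    "plucker d R (w[i2 := q]) = c" "plucker d R (w[i2 := q']) = e"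
proof -
  have len: "length w = d" using I_seq_length[OF w] .
  have i1: "i1 < d" using i12 by simp
  have lt: "w ! i1 < w ! i2" using I_seq_less[OF w i12] .
  have le_N: "w ! i2 \<le> N" using I_seq_range[OF w] i12 by auto
  define U where "U = (\<lambda>j k. if j = q \<and> k = w ! i1 then a else if j = q' \<and> k = w ! i1 then b
     else if j = q \<and> k = w ! i2 then c else if j = q' \<and> k = w ! i2 then e else 0)"
  have g: "(\<lambda>j k. id_mat N j k + U j k) \<in> borel N"
  proof (rule unipotent_in_borel)
    fix j k assume "U j k \<noteq> 0"
    then have "(j = q \<or> j = q') \<and> (k = w ! i1 \<or> k = w ! i2)" unfolding U_def by (auto split: if_splits)
    then show "1 \<le> j \<and> j < k \<and> k \<le> N" using q q' lt le_N by auto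
  next
    fix j m k show "U j m * U m k = 0" unfolding U_def using q q' lt by auto
  qed
  have "\<forall>j\<in>set w. \<forall>k. U j k = 0" using q(3) q'(3) unfolding U_def by auto
  note R = cell_frame_unipotent[OF w this]
  show ?thesis
  proof (rule that)
    show "cell_frame d (\<lambda>j k. id_mat N j k + U j k) w \<in> frames d N"
      "rowsp d (cell_frame d (\<lambda>j k. id_mat N j k + U j k) w) \<in> schubert w d N"
      using cell_frame_in_frames[OF g w] cell_frame_in_schubert[OF g w] by auto
    show "plucker d (cell_frame d (\<lambda>j k. id_mat N j k + U j k) w) (w[i1 := q]) = a"
      "plucker d (cell_frame d (\<lambda>j k. id_mat N j k + U j k) w) (w[i1 := q']) = b"
      using plucker_normalized_update[OF R(1) i1 len] R(2)[OF i1] q(3) q'(3) qq' by (simp_all add: U_def)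
    show "plucker d (cell_frame d (\<lambda>j k. id_mat N j k + U j k) w) (w[i2 := q]) = c"
      "plucker d (cell_frame d (\<lambda>j k. id_mat N j k + U j k) w) (w[i2 := q']) = e"
      using plucker_normalized_update[OF R(1) i12(2) len] R(2)[OF i12(2)] q(3) q'(3) qq' lt
      by (simp_all add: U_def)
  qed
qed

definition cross_ratio_avoids ::
    "complex \<Rightarrow> nat list \<Rightarrow> nat list \<Rightarrow> nat list \<Rightarrow> nat list \<Rightarrow> (nat list \<Rightarrow> complex) \<Rightarrow> bool" where
  "cross_ratio_avoids c I1 I2 I3 I4 f \<longleftrightarrow> f I3 \<noteq> 0 \<and> f I4 \<noteq> 0 \<and> f I1 * f I2 \<noteq> c * (f I3 * f I4)"

lemma open_cross_ratio_avoids: "open {A. cross_ratio_avoids c I1 I2 I3 I4 (plucker d A)}"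
  unfolding cross_ratio_avoids_def Collect_conj_eq
  by (intro open_Int open_plucker_nonzero open_Collect_neq continuous_on_mult continuous_plucker
      continuous_on_const)

lemma scale_invariant_cross_ratio_avoids: "scale_invariant (cross_ratio_avoids c I1 I2 I3 I4)"
  unfolding scale_invariant_def cross_ratio_avoids_def
proof (intro allI impI)
  fix f :: "nat list \<Rightarrow> complex" and a :: complex
  assume "f I3 \<noteq> 0 \<and> f I4 \<noteq> 0 \<and> f I1 * f I2 \<noteq> c * (f I3 * f I4)" and "a \<noteq> 0"
  moreover have "a * f I1 * (a * f I2) = (a * a) * (f I1 * f I2)"
    "c * (a * f I3 * (a * f I4)) = (a * a) * (c * (f I3 * f I4))"
    by (simp_all add: mult_ac)
  ultimately show "a * f I3 \<noteq> 0 \<and> a * f I4 \<noteq> 0 \<and> a * f I1 * (a * f I2) \<noteq> c * (a * f I3 * (a * f I4))"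
    by auto
qed

text \<open>Under the torus the four coordinates \<open>I1, \<dots>, I4\<close> below scale by weights with
  \<open>W1 W2 = W3 W4\<close>, so their cross ratio is constant on every orbit, while on the Schubert
  variety it takes every value.\<close>

lemma not_spherical_if_two_gaps:
  assumes w: "w \<in> I_seq d N" and i12: "i1 < i2" "i2 < d"
    and q: "1 \<le> q" "q < w ! i1" "q \<notin> set w" and q': "1 \<le> q'" "q' < w ! i1" "q' \<notin> set w"
    and qq': "q \<noteq> q'"
  shows "\<not> T_spherical w d N"
proof
  assume "T_spherical w d N"
  then obtain A0 where orbit: "\<forall>P A. open {A. P (plucker d A)} \<longrightarrow> scale_invariant P \<longrightarrow>
      A \<in> frames d N \<longrightarrow> rowsp d A \<in> schubert w d N \<longrightarrow> P (plucker d A) \<longrightarrow>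
      (\<exists>x\<in>torus N. P (\<lambda>I. plucker d A0 I * torus_weight d (\<lambda>j. x j j) I))"
    by (rule spherical_orbit_frame)
  define I1 I2 I3 I4 where "I1 = w[i1 := q]" and "I2 = w[i2 := q']" and "I3 = w[i1 := q']"
    and "I4 = w[i2 := q]"
  have avoid: "\<exists>x\<in>torus N. cross_ratio_avoids c I1 I2 I3 I4 (\<lambda>I. plucker d A0 I * torus_weight d (\<lambda>j. x j j) I)"
    for c
  proof -
    obtain R where R: "R \<in> frames d N" "rowsp d R \<in> schubert w d N"
      "plucker d R I1 = 1" "plucker d R I3 = 1" "plucker d R I4 = 1" "plucker d R I2 = c + 1"
      using schubert_test_frame[OF w i12 q q' qq', of 1 1 1 "c + 1"]
      unfolding I1_def I2_def I3_def I4_def by blast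
    then have "cross_ratio_avoids c I1 I2 I3 I4 (plucker d R)" by (simp add: cross_ratio_avoids_def)
    then show ?thesis
      by (rule orbit[rule_format, OF open_cross_ratio_avoids scale_invariant_cross_ratio_avoids R(1,2)])
  qed
  obtain x where "cross_ratio_avoids 0 I1 I2 I3 I4 (\<lambda>I. plucker d A0 I * torus_weight d (\<lambda>j. x j j) I)"
    using avoid[of 0] by blast
  then have nz: "plucker d A0 I3 \<noteq> 0" "plucker d A0 I4 \<noteq> 0" by (auto simp: cross_ratio_avoids_def)
  define c where "c = plucker d A0 I1 * plucker d A0 I2 / (plucker d A0 I3 * plucker d A0 I4)"
  obtain y where y: "y \<in> torus N"
    and avoid_y: "cross_ratio_avoids c I1 I2 I3 I4 (\<lambda>I. plucker d A0 I * torus_weight d (\<lambda>j. y j j) I)"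
    using avoid[of c] by blast
  let ?p = "plucker d A0" and ?W = "torus_weight d (\<lambda>j. y j j)"
  have "y (w ! i1) (w ! i1) \<noteq> 0" "y (w ! i2) (w ! i2) \<noteq> 0"
    using torus_diag_nonzero[OF y] I_seq_range[OF w] i12 by auto
  then have W: "?W I1 * ?W I2 = ?W I3 * ?W I4"
    unfolding I1_def I2_def I3_def I4_def
    by (rule torus_weight_swap[rotated 3]) (use i12 I_seq_length[OF w] in auto)
  have "(?p I1 * ?W I1) * (?p I2 * ?W I2) = (?p I1 * ?p I2) * (?W I1 * ?W I2)"
    by (simp add: mult_ac)
  also have "\<dots> = (c * (?p I3 * ?p I4)) * (?W I3 * ?W I4)"
    using nz W by (simp add: c_def)
  also have "\<dots> = c * ((?p I3 * ?W I3) * (?p I4 * ?W I4))"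
    by (simp add: mult_ac)
  finally show False using avoid_y by (simp add: cross_ratio_avoids_def)
qed

section \<open>A dense open orbit\<close>

definition free_coord :: "nat list \<Rightarrow> nat \<Rightarrow> nat \<Rightarrow> bool" where
  "free_coord w i j \<longleftrightarrow> 1 \<le> j \<and> j \<notin> set w \<and> j < w ! i"

lemma free_coord_cases:
  assumes "i < length w"
  obtains (pivot) k where "k < length w" "j = w ! k" | (right) "j \<notin> set w" "w ! i < j"
    | (zero) "j = 0" | (free) "free_coord w i j"
proof (cases "j \<in> set w")
  case True
  then show ?thesis using that(1) by (auto simp: in_set_conv_nth)
next
  case False
  moreover have "w ! i \<noteq> j" using False assms by auto
  ultimately show ?thesis
    using that(2-4) by (cases "j = 0"; cases "w ! i < j") (auto simp: free_coord_def)
qed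

definition cell_generic :: "nat \<Rightarrow> nat list \<Rightarrow> (nat list \<Rightarrow> complex) \<Rightarrow> bool" where
  "cell_generic d w f \<longleftrightarrow> f w \<noteq> 0 \<and> (\<forall>i<d. \<forall>j. free_coord w i j \<longrightarrow> f (w[i := j]) \<noteq> 0)"

lemma open_cell_generic: "open {A. cell_generic d w (plucker d A)}"
proof -
  let ?E = "{(i, j). i < d \<and> free_coord w i j}"
  have "{A. cell_generic d w (plucker d A)}
      = {A. plucker d A w \<noteq> 0} \<inter> (\<Inter>(i, j)\<in>?E. {A. plucker d A (w[i := j]) \<noteq> 0})"
    unfolding cell_generic_def by auto
  moreover have "finite ?E"
    by (rule finite_subset[of _ "SIGMA i:{..<d}. {..<w ! i}"]) (auto simp: free_coord_def)
  ultimately show ?thesis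
    by (simp add: open_Int open_INT open_plucker_nonzero case_prod_beta)
qed

lemma scale_invariant_cell_generic: "scale_invariant (cell_generic d w)"
  unfolding scale_invariant_def cell_generic_def by auto

definition base_elem :: "nat \<Rightarrow> nat list \<Rightarrow> nat \<Rightarrow> nat \<Rightarrow> complex" where
  "base_elem N w = (\<lambda>j k. id_mat N j k + (if 1 \<le> j \<and> j \<notin> set w \<and> k \<in> set w \<and> j < k then 1 else 0))"

definition base_frame :: "nat \<Rightarrow> nat \<Rightarrow> nat list \<Rightarrow> nat \<Rightarrow> nat \<Rightarrow> complex" where
  "base_frame d N w = cell_frame d (base_elem N w) w"

lemma base_elem_in_borel: "w \<in> I_seq d N \<Longrightarrow> base_elem N w \<in> borel N"
  unfolding base_elem_def by (rule unipotent_in_borel) (auto simp: I_seq_def split: if_splits)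

lemma base_frame_entry:
  assumes w: "w \<in> I_seq d N" and i: "i < d"
  shows "base_frame d N w (Suc i) j = (if j = w ! i then 1 else 0) + (if free_coord w i j then 1 else 0)"
  using I_seq_range[OF w i] nth_mem[of i w] i I_seq_length[OF w]
  by (auto simp: base_frame_def cell_frame_def base_elem_def id_mat_def free_coord_def)

lemma base_frame_in_frames: "w \<in> I_seq d N \<Longrightarrow> base_frame d N w \<in> frames d N"
  unfolding base_frame_def by (rule cell_frame_in_frames[OF base_elem_in_borel])

lemma base_frame_in_schubert: "w \<in> I_seq d N \<Longrightarrow> rowsp d (base_frame d N w) \<in> schubert w d N"
  unfolding base_frame_def by (rule cell_frame_in_schubert[OF base_elem_in_borel])

lemma normalized_base_frame:
  assumes w: "w \<in> I_seq d N"
  shows "normalized_at d w (base_frame d N w)"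
  unfolding base_frame_def base_elem_def by (rule cell_frame_unipotent(1)[OF w]) simp

text \<open>Here \<open>q\<close> is the only entry of \<open>{1..d}\<close> missing from \<open>w\<close>, so the free coordinates of a
  row \<open>i < d - 1\<close> lie in column \<open>q\<close>, and those of the last row in column \<open>q\<close> and in the
  columns strictly between \<open>d\<close> and \<open>w ! (d - 1)\<close>. Hence a normal form \<open>R\<close> whose free
  coordinates are nonzero equals \<open>diag (row_factor R) * base_frame * diag (col_factor R)\<close>.\<close>

locale toric_schubert =
  fixes w :: "nat list" and d N q :: nat
  assumes w_seq: "w \<in> I_seq d N"
    and below_d: "\<And>i. Suc i < d \<Longrightarrow> w ! i \<le> d"
    and gap: "{1..d} - set w = {q}"
begin

lemma length_w: "length w = d"
  using I_seq_length[OF w_seq] .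

lemma q_bounds: "1 \<le> q" "q \<le> d" "q \<notin> set w"
proof -
  have "q \<in> {1..d} - set w" unfolding gap by simp
  then show "1 \<le> q" "q \<le> d" "q \<notin> set w" by simp_all
qed

lemma gap_eq_q: "1 \<le> j \<Longrightarrow> j \<le> d \<Longrightarrow> j \<notin> set w \<Longrightarrow> j = q"
proof -
  assume "1 \<le> j" "j \<le> d" "j \<notin> set w"
  then have "j \<in> {1..d} - set w" by simp
  then show "j = q" unfolding gap by simp
qed

definition base_orbit :: "(nat \<Rightarrow> complex) set set" where
  "base_orbit = (\<lambda>t. mat_act N t (rowsp d (base_frame d N w))) ` torus N"

definition row_factor :: "(nat \<Rightarrow> nat \<Rightarrow> complex) \<Rightarrow> nat \<Rightarrow> complex" where
  "row_factor R i = (if q < w ! i then R (Suc i) q else 1)"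

definition col_factor :: "(nat \<Rightarrow> nat \<Rightarrow> complex) \<Rightarrow> nat \<Rightarrow> complex" where
  "col_factor R j = (if j \<in> set w then 1 / row_factor R (THE i. i < d \<and> w ! i = j)
     else if d < j \<and> j < w ! (d - 1) then R d j / row_factor R (d - 1) else 1)"

context
  fixes R :: "nat \<Rightarrow> nat \<Rightarrow> complex"
  assumes free_nz: "\<And>i j. i < d \<Longrightarrow> free_coord w i j \<Longrightarrow> R (Suc i) j \<noteq> 0"
begin

lemma row_factor_nonzero: "i < d \<Longrightarrow> row_factor R i \<noteq> 0"
  using free_nz[of i q] q_bounds by (auto simp: row_factor_def free_coord_def)

lemma col_factor_nth: "k < d \<Longrightarrow> col_factor R (w ! k) = 1 / row_factor R k"
proof -
  assume k: "k < d"
  have "(THE i. i < d \<and> w ! i = w ! k) = k"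
    using k I_seq_nth_eq_iff[OF w_seq _ k] by blast
  then show ?thesis using k length_w by (simp add: col_factor_def)
qed

lemma col_factor_nonzero: "col_factor R j \<noteq> 0"
proof (cases "j \<in> set w")
  case True
  then obtain k where "k < d" "j = w ! k" using length_w by (auto simp: in_set_conv_nth)
  then show ?thesis using col_factor_nth row_factor_nonzero by simp
next
  case False
  have "d \<noteq> 0" using q_bounds by simp
  then have "R d j \<noteq> 0" if "d < j" "j < w ! (d - 1)"
    using free_nz[of "d - 1" j] that False by (simp add: free_coord_def)
  then show ?thesis using False row_factor_nonzero[of "d - 1"] \<open>d \<noteq> 0\<close> by (simp add: col_factor_def)
qed

lemma normal_form_eq_scaled_base:
  assumes R: "R \<in> frames d N" "normalized_at d w R" and above: "\<And>i j. i < d \<Longrightarrow> w ! i < j \<Longrightarrow> R (Suc i) j = 0"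
    and i: "i < d"
  shows "R (Suc i) j = row_factor R i * (base_frame d N w (Suc i) j * col_factor R j)"
proof -
  have "i < length w" using i length_w by simp
  then show ?thesis
  proof (cases rule: free_coord_cases[where j = j])
    case (pivot k)
    then have k: "k < d" using length_w by simp
    have "R (Suc i) j = (if i = k then 1 else 0)"
      using R(2) i k pivot by (simp add: normalized_at_def)
    moreover have "base_frame d N w (Suc i) j = (if i = k then 1 else 0)"
      using normalized_base_frame[OF w_seq] i k pivot by (simp add: normalized_at_def)
    moreover have "col_factor R j = 1 / row_factor R k" using col_factor_nth k pivot by simp
    ultimately show ?thesis using row_factor_nonzero[OF i] row_factor_nonzero[OF k] by simp
  next
    case right
    then show ?thesis using above[OF i] base_frame_entry[OF w_seq i] by (simp add: free_coord_def)
  next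
    case zero
    then show ?thesis using R(1) base_frame_entry[OF w_seq i] I_seq_range[OF w_seq i]
      by (simp add: frames_def free_coord_def)
  next
    case free
    then have base: "base_frame d N w (Suc i) j = 1"
      using base_frame_entry[OF w_seq i] by (auto simp: free_coord_def)
    show ?thesis
    proof (cases "j \<le> d")
      case True
      then have "j = q" using free gap_eq_q by (simp add: free_coord_def)
      then show ?thesis
        using free base q_bounds by (simp add: row_factor_def col_factor_def free_coord_def)
    next
      case False
      then have "\<not> Suc i < d" using free below_d[of i] by (auto simp: free_coord_def)
      then have "i = d - 1" "Suc i = d" using i by auto
      then show ?thesis
        using free base False row_factor_nonzero[OF i] by (simp add: col_factor_def free_coord_def)
    qed
  qed
qed

lemma normal_form_in_base_orbit:
  assumes R: "R \<in> frames d N" "normalized_at d w R" and above: "\<And>i j. i < d \<Longrightarrow> w ! i < j \<Longrightarrow> R (Suc i) j = 0"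
  shows "rowsp d R \<in> base_orbit"
proof -
  define x where "x = torus_elem N (col_factor R)"
  have x: "x \<in> torus N" unfolding x_def by (rule torus_elem_in_torus) (rule col_factor_nonzero)
  have base: "base_frame d N w \<in> frames d N" by (rule base_frame_in_frames[OF w_seq])
  have "rowsp d R = rowsp d (\<lambda>i j. row_factor R (i - 1) * (base_frame d N w i j * x j j))"
  proof (rule rowsp_cong)
    fix i assume "i \<in> {1..d}"
    then have i: "i - 1 < d" "Suc (i - 1) = i" by auto
    show "R i = (\<lambda>j. row_factor R (i - 1) * (base_frame d N w i j * x j j))"
    proof
      fix j
      show "R i j = row_factor R (i - 1) * (base_frame d N w i j * x j j)"
      proof (cases "1 \<le> j \<and> j \<le> N")
        case True
        then show ?thesis using normal_form_eq_scaled_base[OF R above i(1)] i by (simp add: x_def torus_elem_def)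
      qed (use R(1) base \<open>i \<in> {1..d}\<close> in \<open>auto simp: frames_def\<close>)
    qed
  qed
  also have "\<dots> = rowsp d (\<lambda>i j. base_frame d N w i j * x j j)"
    by (rule rowsp_scale_rows) (use row_factor_nonzero in auto)
  also have "\<dots> = mat_act N x (rowsp d (base_frame d N w))"
    using torus_orbit_frame(1)[OF x base] by simp
  finally show ?thesis using x unfolding base_orbit_def by blast
qed

end

lemma generic_in_base_orbit:
  assumes A: "A \<in> frames d N"
    and gen: "cell_generic d w (plucker d A)" and van: "schubert_vanishing d w (plucker d A)"
  shows "rowsp d A \<in> base_orbit"
proof -
  have nz: "plucker d A w \<noteq> 0" using gen unfolding cell_generic_def by simp
  obtain R where R: "rowsp d R = rowsp d A" "R \<in> frames d N" "normalized_at d w R"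
    and entry: "\<forall>i<d. \<forall>j. R (Suc i) j = plucker d A (w[i := j]) / plucker d A w"
    by (rule normalize_frame[OF A nz length_w])
  have "rowsp d R \<in> base_orbit"
  proof (rule normal_form_in_base_orbit[OF _ R(2,3)])
    show "R (Suc i) j \<noteq> 0" if "i < d" "free_coord w i j" for i j
      using gen that nz entry unfolding cell_generic_def by simp
    show "R (Suc i) j = 0" if "i < d" "w ! i < j" for i j
      using van that entry unfolding schubert_vanishing_def by simp
  qed
  then show ?thesis using R(1) by simp
qed

lemma base_orbit_subset_schubert: "base_orbit \<subseteq> schubert w d N"
proof
  fix V assume "V \<in> base_orbit"
  then obtain x where x: "x \<in> torus N" "V = mat_act N x (rowsp d (base_frame d N w))"
    unfolding base_orbit_def by blast
  have g: "(\<lambda>j k. x j j * base_elem N w j k) \<in> borel N"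
    by (rule scale_rows_in_borel[OF base_elem_in_borel[OF w_seq]]) (rule torus_diag_nonzero[OF x(1)])
  have "V = rowsp d (\<lambda>i j. base_frame d N w i j * x j j)"
    using x torus_orbit_frame(1) base_frame_in_frames[OF w_seq] by simp
  also have "(\<lambda>i j. base_frame d N w i j * x j j) = cell_frame d (\<lambda>j k. x j j * base_elem N w j k) w"
    unfolding base_frame_def cell_frame_def by (intro ext) (simp add: mult.commute)
  finally show "V \<in> schubert w d N" using cell_frame_in_schubert[OF g w_seq] by simp
qed

lemma base_orbit_subset_generic: "base_orbit \<subseteq> plucker_set d N (cell_generic d w)"
proof
  fix V assume "V \<in> base_orbit"
  then obtain x where x: "x \<in> torus N" "V = mat_act N x (rowsp d (base_frame d N w))"
    unfolding base_orbit_def by blast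
  let ?R = "base_frame d N w"
  have R: "?R \<in> frames d N" by (rule base_frame_in_frames[OF w_seq])
  have weight: "torus_weight d (\<lambda>j. x j j) I \<noteq> 0" if "\<forall>b<d. 1 \<le> I ! b \<and> I ! b \<le> N" for I
    using that torus_diag_nonzero[OF x(1)] by (simp add: torus_weight_def)
  have "cell_generic d w (plucker d (\<lambda>i j. ?R i j * x j j))"
    unfolding cell_generic_def plucker_scale_cols
  proof (intro conjI allI impI)
    show "plucker d ?R w * torus_weight d (\<lambda>j. x j j) w \<noteq> 0"
      using plucker_normalized[OF normalized_base_frame[OF w_seq]] weight I_seq_range[OF w_seq] by simp
  next
    fix i j assume i: "i < d" and j: "free_coord w i j"
    have "plucker d ?R (w[i := j]) = 1"
      using plucker_normalized_update[OF normalized_base_frame[OF w_seq] i length_w] j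
        base_frame_entry[OF w_seq i] by (auto simp: free_coord_def)
    moreover have "j \<le> N" using j I_seq_range[OF w_seq i] by (simp add: free_coord_def)
    then have "\<forall>b<d. 1 \<le> w[i := j] ! b \<and> w[i := j] ! b \<le> N"
      using I_seq_range[OF w_seq] i j length_w by (auto simp: nth_list_update free_coord_def)
    then have "torus_weight d (\<lambda>j. x j j) (w[i := j]) \<noteq> 0" by (rule weight)
    ultimately show "plucker d ?R (w[i := j]) * torus_weight d (\<lambda>j. x j j) (w[i := j]) \<noteq> 0" by simp
  qed
  then show "V \<in> plucker_set d N (cell_generic d w)"
    unfolding x(2) torus_orbit_frame(1)[OF x(1) R] plucker_set_def
    using torus_orbit_frame(2)[OF x(1) R] by blast
qed

lemma openin_base_orbit: "openin (subtopology (grass_top d N) (schubert w d N)) base_orbit"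
  unfolding openin_subtopology
proof (intro exI conjI)
  show "openin (grass_top d N) (plucker_set d N (cell_generic d w))"
    by (rule openin_plucker_set[OF open_cell_generic scale_invariant_cell_generic])
  show "base_orbit = plucker_set d N (cell_generic d w) \<inter> schubert w d N"
  proof
    show "plucker_set d N (cell_generic d w) \<inter> schubert w d N \<subseteq> base_orbit"
    proof clarify
      fix V assume "V \<in> plucker_set d N (cell_generic d w)" "V \<in> schubert w d N"
      then obtain A where "A \<in> frames d N" "cell_generic d w (plucker d A)" "V = rowsp d A"
        "rowsp d A \<in> schubert w d N"
        unfolding plucker_set_def by blast
      then show "V \<in> base_orbit"
        using generic_in_base_orbit schubert_vanishing_on_schubert[OF w_seq] by blast
    qed
  qed (use base_orbit_subset_schubert base_orbit_subset_generic in blast)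
qed

text \<open>Every point of the cell is a limit of points of the orbit: fill the vanishing free
  coordinates of its normal form with \<open>s \<noteq> 0\<close> and let \<open>s \<rightarrow> 0\<close>.\<close>

definition fill_free :: "(nat \<Rightarrow> nat \<Rightarrow> complex) \<Rightarrow> nat \<Rightarrow> nat \<Rightarrow> complex" where
  "fill_free R i j = (if 1 \<le> i \<and> i \<le> d \<and> free_coord w (i - 1) j \<and> R i j = 0 then 1 else 0)"

lemma fill_free_in_base_orbit:
  assumes R: "R \<in> frames d N" "normalized_at d w R"
    and above: "\<And>i j. i < d \<Longrightarrow> w ! i < j \<Longrightarrow> R (Suc i) j = 0" and s: "s \<noteq> 0"
  shows "(\<lambda>i j. R i j + s * fill_free R i j) \<in> frames d N"
    and "rowsp d (\<lambda>i j. R i j + s * fill_free R i j) \<in> base_orbit"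
proof -
  let ?R = "\<lambda>i j. R i j + s * fill_free R i j"
  have norm: "normalized_at d w ?R"
    using R(2) length_w by (auto simp: normalized_at_def fill_free_def free_coord_def)
  have "fill_free R i j = 0" if "\<not> (1 \<le> i \<and> i \<le> d \<and> 1 \<le> j \<and> j \<le> N)" for i j
  proof (cases "1 \<le> i \<and> i \<le> d")
    case True
    then have "w ! (i - 1) \<le> N" using I_seq_range[OF w_seq, of "i - 1"] by auto
    then show ?thesis using True that by (auto simp: fill_free_def free_coord_def)
  qed (auto simp: fill_free_def)
  then have "?R i j = 0" if "\<not> (1 \<le> i \<and> i \<le> d \<and> 1 \<le> j \<and> j \<le> N)" for i j
    using R(1) that by (simp add: frames_def)
  then show fr: "?R \<in> frames d N"
    using frames_if_plucker_nonzero[of d N ?R w] plucker_normalized[OF norm] by auto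
  show "rowsp d ?R \<in> base_orbit"
  proof (rule normal_form_in_base_orbit[OF _ fr norm])
    show "?R (Suc i) j \<noteq> 0" if "i < d" "free_coord w i j" for i j
      using that s by (auto simp: fill_free_def)
    show "?R (Suc i) j = 0" if "i < d" "w ! i < j" for i j
      using that above by (auto simp: fill_free_def free_coord_def)
  qed
qed

lemma cell_frame_in_closure_base_orbit:
  assumes g: "g \<in> borel N"
  shows "rowsp d (cell_frame d g w) \<in> grass_top d N closure_of base_orbit"
proof -
  let ?A = "cell_frame d g w"
  have nz: "plucker d ?A w \<noteq> 0" using plucker_cell_frame_nonzero[OF g w_seq] .
  obtain R where R: "rowsp d R = rowsp d ?A" "R \<in> frames d N" "normalized_at d w R"
    and entry: "\<forall>i<d. \<forall>j. R (Suc i) j = plucker d ?A (w[i := j]) / plucker d ?A w"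
    by (rule normalize_frame[OF cell_frame_in_frames[OF g w_seq] nz length_w])
  have above: "R (Suc i) j = 0" if "i < d" "w ! i < j" for i j
    using that entry plucker_cell_frame_raise[OF g w_seq] by simp
  define \<gamma> where "\<gamma> s = (\<lambda>i j. R i j + s * fill_free R i j)" for s :: complex
  have "continuous_on UNIV \<gamma>"
    unfolding \<gamma>_def
    by (intro continuous_on_coordinatewise_then_product continuous_on_add continuous_on_mult
        continuous_on_const continuous_on_id)
  moreover have "\<gamma> s \<in> frames d N \<and> rowsp d (\<gamma> s) \<in> base_orbit" if "s \<noteq> 0" for s
    using fill_free_in_base_orbit[OF R(2,3) above that] unfolding \<gamma>_def by simp
  moreover have "\<gamma> 0 = R" by (simp add: \<gamma>_def)
  ultimately show ?thesis using rowsp_in_closure_of_curve[of \<gamma> d N base_orbit] R(1,2) by simp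
qed

theorem spherical: "T_spherical w d N"
proof -
  let ?V = "rowsp d (base_frame d N w)"
  have V: "?V \<in> schubert w d N" by (rule base_frame_in_schubert[OF w_seq])
  have "(\<lambda>g. mat_act N g (e_pt w)) ` borel N \<subseteq> grass_top d N closure_of base_orbit"
    using cell_frame_in_closure_base_orbit mat_act_e_pt[OF w_seq] by auto
  then have "schubert w d N \<subseteq> grass_top d N closure_of base_orbit"
    unfolding schubert_def by (rule closure_of_minimal[OF _ closedin_closure_of])
  then show ?thesis
    using V openin_base_orbit unfolding T_spherical_def Let_def base_orbit_def by blast
qed

end

section \<open>The reduction of \<open>w\<close>\<close>

lemma I_seq_gap:
  assumes w: "w \<in> I_seq d N" and "i \<le> k" "k < d"
  shows "w ! i + (k - i) \<le> w ! k"
  using assms(2,3)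
proof (induction k)
  case (Suc k)
  show ?case
  proof (cases "i = Suc k")
    case False
    then have "w ! i + (k - i) \<le> w ! k" using Suc by simp
    moreover have "w ! k < w ! Suc k" using I_seq_less[OF w, of k "Suc k"] Suc.prems by simp
    ultimately show ?thesis using False Suc.prems by simp
  qed simp
qed simp

lemma I_seq_lower: "w \<in> I_seq d N \<Longrightarrow> i < d \<Longrightarrow> Suc i \<le> w ! i"
  using I_seq_gap[of w d N 0 i] I_seq_range[of w d N 0] by simp

lemma I_seq_eq_upt: "w \<in> I_seq d N \<Longrightarrow> (\<And>i. i < d \<Longrightarrow> w ! i = Suc i) \<Longrightarrow> w = [1..<d + 1]"
  using I_seq_length by (intro nth_equalityI) (auto simp del: upt_Suc)

lemma red_p_props:
  assumes w: "w \<in> I_seq d N" and ne: "w \<noteq> [1..<d + 1]"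
  shows "red_p w < d" "\<And>i. i < red_p w \<Longrightarrow> w ! i = Suc i" "Suc (Suc (red_p w)) \<le> w ! red_p w"
proof -
  let ?P = "\<lambda>p. p \<le> length w \<and> (\<forall>i<p. w ! i = i + 1)"
  have bound: "?P p \<Longrightarrow> p \<le> d" for p using I_seq_length[OF w] by simp
  have P: "?P (red_p w)" unfolding red_p_def by (rule GreatestI_nat[of ?P 0 d]) (use bound in auto)
  have max: "?P p \<Longrightarrow> p \<le> red_p w" for p
    unfolding red_p_def by (rule Greatest_le_nat[of ?P p d]) (use bound in auto)
  show pre: "w ! i = Suc i" if "i < red_p w" for i using P that by simp
  show lt: "red_p w < d"
  proof (rule ccontr)
    assume "\<not> red_p w < d"
    then have "w ! i = Suc i" if "i < d" for i using P that by auto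
    then show False using I_seq_eq_upt[OF w] ne by blast
  qed
  have "\<not> ?P (Suc (red_p w))" using max by fastforce
  then have "w ! red_p w \<noteq> Suc (red_p w)" using P lt I_seq_length[OF w] by (auto simp: less_Suc_eq)
  then show "Suc (Suc (red_p w)) \<le> w ! red_p w" using I_seq_lower[OF w lt] by simp
qed

lemma reduction_data:
  assumes w: "w \<in> I_seq d N" and ne: "w \<noteq> [1..<d + 1]"
  shows "red_d w = d - red_p w" "red_N w = w ! (d - 1) - red_p w"
    "length (red_w w) = d - red_p w" "\<And>k. k < d - red_p w \<Longrightarrow> red_w w ! k = w ! (red_p w + k) - red_p w"
proof -
  have len: "length w = d" using I_seq_length[OF w] .
  then have "w \<noteq> []" "d \<noteq> 0" using red_p_props(1)[OF w ne] by auto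
  then show "red_d w = d - red_p w" "red_N w = w ! (d - 1) - red_p w" "length (red_w w) = d - red_p w"
    using len by (simp_all add: red_d_def red_N_def red_w_def last_conv_nth)
  show "red_w w ! k = w ! (red_p w + k) - red_p w" if "k < d - red_p w" for k
    using that len by (simp add: red_w_def)
qed

lemma reduction_form_imp_below:
  assumes w: "w \<in> I_seq d N" and ne: "w \<noteq> [1..<d + 1]"
    and red: "(red_d w = 1 \<and> red_w w = [red_N w]) \<or> (red_d w \<ge> 2 \<and> red_w w = [2..<red_d w + 1] @ [red_N w])"
    and i: "Suc i < d"
  shows "w ! i \<le> d"
proof (cases "i < red_p w")
  case True
  then show ?thesis using red_p_props(2)[OF w ne] i by simp
next
  case False
  note data = reduction_data[OF w ne]
  from red show ?thesis
  proof
    assume "red_d w = 1 \<and> red_w w = [red_N w]"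
    then have "d - red_p w = 1" using data(1) by simp
    then show ?thesis using i False by arith
  next
    assume h: "red_d w \<ge> 2 \<and> red_w w = [2..<red_d w + 1] @ [red_N w]"
    define k where "k = i - red_p w"
    have k: "k < d - red_p w - 1" using i False unfolding k_def by simp
    have "red_w w ! k = [2..<red_d w + 1] ! k" using h k data(1) by (simp add: nth_append)
    also have "\<dots> = k + 2" using k data(1) by (simp del: upt_Suc)
    finally have "w ! (red_p w + k) - red_p w = k + 2" using data(4)[of k] k by simp
    moreover have "red_p w + k = i" using False unfolding k_def by simp
    ultimately show ?thesis using i by simp
  qed
qed

lemma below_imp_nth_eq:
  assumes w: "w \<in> I_seq d N" and ne: "w \<noteq> [1..<d + 1]" and below: "\<forall>i. Suc i < d \<longrightarrow> w ! i \<le> d"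
    and i: "red_p w \<le> i" "Suc i < d"
  shows "w ! i = i + 2"
proof -
  have "w ! red_p w + (i - red_p w) \<le> w ! i" using I_seq_gap[OF w i(1)] i(2) by simp
  moreover have "w ! i + (d - 2 - i) \<le> w ! (d - 2)" using I_seq_gap[OF w, of i "d - 2"] i(2) by simp
  moreover have "w ! (d - 2) \<le> d" using below i(2) by simp
  ultimately show ?thesis using red_p_props(3)[OF w ne] i by simp
qed

lemma below_imp_reduction_form:
  assumes w: "w \<in> I_seq d N" and ne: "w \<noteq> [1..<d + 1]" and below: "\<forall>i. Suc i < d \<longrightarrow> w ! i \<le> d"
  shows "(red_d w = 1 \<and> red_w w = [red_N w]) \<or> (red_d w \<ge> 2 \<and> red_w w = [2..<red_d w + 1] @ [red_N w])"
proof -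
  define p where "p = red_p w"
  note data = reduction_data[OF w ne, folded p_def]
  have p: "p < d" using red_p_props[OF w ne] unfolding p_def by auto
  show ?thesis
  proof (cases "d - p = 1")
    case True
    then have "red_w w = [red_w w ! 0]" using data(3) by (cases "red_w w") auto
    moreover have "p = d - 1" using True by arith
    then have "red_w w ! 0 = red_N w" using data(2) data(4)[of 0] True by simp
    ultimately show ?thesis using True data(1) by simp
  next
    case False
    then have dp2: "d - p \<ge> 2" using p by simp
    have "red_w w = [2..<red_d w + 1] @ [red_N w]"
    proof (rule nth_equalityI)
      show "length (red_w w) = length ([2..<red_d w + 1] @ [red_N w])" using data(1,3) dp2 by simp
    next
      fix k assume "k < length (red_w w)"
      then have k: "k < d - p" using data(3) by simp
      show "red_w w ! k = ([2..<red_d w + 1] @ [red_N w]) ! k"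
      proof (cases "k < d - p - 1")
        case True
        then have "w ! (p + k) = p + k + 2"
          using below_imp_nth_eq[OF w ne below, of "p + k"] unfolding p_def by simp
        moreover have "([2..<red_d w + 1] @ [red_N w]) ! k = k + 2"
          using True data(1) dp2 by (simp add: nth_append del: upt_Suc)
        ultimately show ?thesis using data(4)[OF k] by simp
      next
        case False
        then have "k = d - p - 1" "p + (d - p - 1) = d - 1" using k p by simp_all
        moreover have "length [2..<red_d w + 1] = d - p - 1" using data(1) dp2 by simp
        ultimately show ?thesis using data(2) data(4)[OF k] by (simp add: nth_append)
      qed
    qed
    then show ?thesis using dp2 data(1) by simp
  qed
qed

lemma toric_gap:
  assumes w: "w \<in> I_seq d N" and ne: "w \<noteq> [1..<d + 1]" and below: "\<forall>i. Suc i < d \<longrightarrow> w ! i \<le> d"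
  obtains q where "{1..d} - set w = {q}"
proof -
  have len: "length w = d" using I_seq_length[OF w] .
  have "d \<noteq> 0" using ne len by auto
  have last: "d < w ! (d - 1)"
  proof (rule ccontr)
    assume "\<not> d < w ! (d - 1)"
    have "w ! i = Suc i" if "i < d" for i
    proof -
      have "w ! i + (d - 1 - i) \<le> w ! (d - 1)" using I_seq_gap[OF w, of i "d - 1"] that by simp
      then show ?thesis using I_seq_lower[OF w that] that \<open>\<not> d < w ! (d - 1)\<close> by linarith
    qed
    then show False using I_seq_eq_upt[OF w] ne by blast
  qed
  have "{1..d} \<inter> set w = (\<lambda>i. w ! i) ` {..<d - 1}"
  proof (intro equalityI subsetI)
    fix j assume "j \<in> {1..d} \<inter> set w"
    then obtain i where "i < d" "j = w ! i" "j \<le> d" using len by (auto simp: in_set_conv_nth)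
    then show "j \<in> (\<lambda>i. w ! i) ` {..<d - 1}" using last by (cases "i = d - 1") auto
  next
    fix j assume "j \<in> (\<lambda>i. w ! i) ` {..<d - 1}"
    then show "j \<in> {1..d} \<inter> set w" using below I_seq_range[OF w] len by auto
  qed
  moreover have "inj_on (\<lambda>i. w ! i) {..<d - 1}" using I_seq_nth_eq_iff[OF w] by (auto simp: inj_on_def)
  ultimately have "card ({1..d} \<inter> set w) = d - 1" by (simp add: card_image)
  then have "card ({1..d} - set w) = 1"
    using card_Diff_subset_Int[of "{1..d}" "set w"] \<open>d \<noteq> 0\<close> by (simp add: Int_commute)
  then show ?thesis using that card_1_singletonE by blast
qed

lemma two_gaps:
  assumes w: "w \<in> I_seq d N" and i1: "Suc i1 < d" "d < w ! i1"
  obtains q q' where "q \<in> {1..d} - set w" "q' \<in> {1..d} - set w" "q \<noteq> q'"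
proof -
  have len: "length w = d" using I_seq_length[OF w] .
  have "{1..d} \<inter> set w \<subseteq> (\<lambda>k. w ! k) ` {..<i1}"
  proof
    fix j assume "j \<in> {1..d} \<inter> set w"
    then obtain k where k: "k < d" "j = w ! k" "j \<le> d" using len by (auto simp: in_set_conv_nth)
    have "k < i1"
    proof (rule ccontr)
      assume "\<not> k < i1"
      then have "w ! i1 \<le> w ! k" using I_seq_le[OF w, of i1 k] k(1) by simp
      then show False using k i1(2) by simp
    qed
    then show "j \<in> (\<lambda>k. w ! k) ` {..<i1}" using k by auto
  qed
  then have "card ({1..d} \<inter> set w) \<le> card ((\<lambda>k. w ! k) ` {..<i1})" by (intro card_mono) simp_all
  also have "\<dots> \<le> i1" using card_image_le[of "{..<i1}" "\<lambda>k. w ! k"] by simp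
  finally have "card ({1..d} - set w) \<ge> 2"
    using card_Diff_subset_Int[of "{1..d}" "set w"] i1 by (simp add: Int_commute)
  then have "{1..d} - set w \<noteq> {}" by (metis card.empty not_numeral_le_zero)
  then obtain q where q: "q \<in> {1..d} - set w" by blast
  then have "card (({1..d} - set w) - {q}) \<ge> 1" using \<open>card ({1..d} - set w) \<ge> 2\<close> by simp
  then have "({1..d} - set w) - {q} \<noteq> {}" by (metis card.empty not_one_le_zero)
  then obtain q' where "q' \<in> ({1..d} - set w) - {q}" by blast
  then show ?thesis using that q by blast
qed

theorem proposition6p1:
  fixes w :: "nat list" and d N :: nat
  assumes "1 \<le> d" and "d < N"
    and "w \<in> I_seq d N"
    and "w \<noteq> [1..<d+1]"
  shows "T_spherical w d N \<longleftrightarrow>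
    ((red_d w = 1 \<and> red_w w = [red_N w]) \<or>
     (red_d w \<ge> 2 \<and> red_w w = [2..<red_d w + 1] @ [red_N w]))"
proof (cases "\<forall>i. Suc i < d \<longrightarrow> w ! i \<le> d")
  case True
  then obtain q where "{1..d} - set w = {q}" using toric_gap assms(3,4) by blast
  then interpret toric_schubert w d N q
    using True assms(3) by unfold_locales auto
  show ?thesis using spherical below_imp_reduction_form[OF assms(3,4) True] by simp
next
  case False
  then obtain i1 where i1: "Suc i1 < d" "d < w ! i1" by (auto simp: not_le)
  then obtain q q' where "q \<in> {1..d} - set w" "q' \<in> {1..d} - set w" "q \<noteq> q'"
    using two_gaps assms(3) by blast
  then have "\<not> T_spherical w d N"
    using not_spherical_if_two_gaps[OF assms(3), of i1 "d - 1" q q'] i1 by auto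
  then show ?thesis using False reduction_form_imp_below[OF assms(3,4)] by blast
qed

end
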